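(* Let $H$ be a separable infinite-dimensional complex Hilbert space. Let $x_1,\dots,x_n,y_1,\dots,y_n\in H$ be vectors of norm $1$, let $T\in L(H)$ with $\|T\|\le 1$, let $x\in H\setminus\{0\}$, $z\in H$ and $\epsilon>0$. Then there exist a finite rank operator $S\in L(H)$ with $\|S\|\le 1$, a number $a\in\mathbb{R}$ and a natural number $N$ depending only on $\epsilon$ such that $|\langle (S-T)x_j,y_j\rangle|<\epsilon$ and $\langle z-aS^Nx,y_j\rangle=0$ for every $j=1,\dots,n$, and $\|S^{l+1}x\|=\|S^lx\|$ for every integer $0\le l<N$.
   Context: $L(H)$ denotes the bounded linear operators on $H$; $\langle\cdot,\cdot\rangle$ is the inner product of $H$. *)

theory Defs
  imports "HOL-Analysis.Analysis"
begin

text \<open>Complex Hilbert spaces are not available in the distribution libraries,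
  so we introduce the class of complex inner product spaces that are complete
  (i.e. complex Hilbert spaces) on top of the library's real Banach spaces.
  The inner product is linear in the first and conjugate linear in the second
  argument, and induces the norm.\<close>

class complex_hilbert = banach +
  fixes scaleC :: "complex \<Rightarrow> 'a \<Rightarrow> 'a" (infixr "*\<^sub>C" 75)
    and cinner :: "'a \<Rightarrow> 'a \<Rightarrow> complex"
  assumes scaleC_add_right: "c *\<^sub>C (x + y) = c *\<^sub>C x + c *\<^sub>C y"
    and scaleC_add_left: "(c + d) *\<^sub>C x = c *\<^sub>C x + d *\<^sub>C x"
    and scaleC_scaleC: "c *\<^sub>C (d *\<^sub>C x) = (c * d) *\<^sub>C x"
    and scaleC_one: "1 *\<^sub>C x = x"
    and scaleR_scaleC: "r *\<^sub>R x = complex_of_real r *\<^sub>C x"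
    and cinner_add_left: "cinner (x + y) z = cinner x z + cinner y z"
    and cinner_scaleC_left: "cinner (c *\<^sub>C x) y = c * cinner x y"
    and cinner_commute: "cinner y x = cnj (cinner x y)"
    and cinner_self_norm: "cinner x x = complex_of_real ((norm x)\<^sup>2)"

definition cspan :: "'a::complex_hilbert set \<Rightarrow> 'a set" where
  "cspan B = {v. \<exists>F c. finite F \<and> F \<subseteq> B \<and> v = (\<Sum>b\<in>F. c b *\<^sub>C b)}"

definition infinite_dimensional :: "'a::complex_hilbert itself \<Rightarrow> bool" where
  "infinite_dimensional _ \<longleftrightarrow> \<not> (\<exists>B::'a set. finite B \<and> cspan B = UNIV)"

definition clinear_op :: "('a::complex_hilbert \<Rightarrow> 'a) \<Rightarrow> bool" where
  "clinear_op T \<longleftrightarrow> (\<forall>x y. T (x + y) = T x + T y) \<and> (\<forall>c x. T (c *\<^sub>C x) = c *\<^sub>C T x)"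

definition bounded_op :: "('a::complex_hilbert \<Rightarrow> 'a) \<Rightarrow> bool" where
  "bounded_op T \<longleftrightarrow> clinear_op T \<and> (\<exists>K. \<forall>x. norm (T x) \<le> K * norm x)"

definition finite_rank :: "('a::complex_hilbert \<Rightarrow> 'a) \<Rightarrow> bool" where
  "finite_rank T \<longleftrightarrow> (\<exists>B. finite B \<and> range T \<subseteq> cspan B)"

end

theory Submission
  imports Defs
begin

text \<open>Let \<open>E\<close> be a finite-dimensional subspace with orthonormal basis \<open>e\<^sub>0 = x/\<parallel>x\<parallel>, \<dots>, e\<^sub>m\<^sub>-\<^sub>1\<close>
  containing \<open>x\<close> and all \<open>x\<^sub>j, y\<^sub>j\<close>, and let \<open>B = P\<^sub>E T\<close>. With \<open>\<rho> = \<surd>(1 - \<eta>)\<close> the operator \<open>S\<close>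
  is built on finitely many orthonormal vectors orthogonal to \<open>E\<close>:
  \<open>S e\<^sub>i = \<rho> (B e\<^sub>i + D e\<^sub>i) + \<surd>\<eta> \<phi>\<^sub>N\<^sub>+\<^sub>1\<^sub>,\<^sub>i\<close>, where the defect vectors \<open>D e\<^sub>i\<close> satisfy
  \<open>\<langle>D e\<^sub>i, D e\<^sub>k\<rangle> = \<delta>\<^sub>i\<^sub>k - \<langle>B e\<^sub>i, B e\<^sub>k\<rangle>\<close> (a Gram factorisation of the positive form \<open>I - B\<^sup>*B\<close>), and \<open>S\<close>
  shifts the fresh vectors along two chains \<open>\<phi>\<^sub>1 \<mapsto> \<dots> \<mapsto> \<phi>\<^sub>N\<close>, \<open>\<phi>\<^sub>N\<^sub>+\<^sub>1 \<mapsto> \<dots> \<mapsto> \<phi>\<^sub>2\<^sub>N\<^sub>-\<^sub>1\<close>.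
  Everything in sight is orthonormal, so \<open>S\<close> is a finite rank partial isometry, and \<open>S\<^sup>l x\<close>
  stays in the span on which \<open>S\<close> is isometric for \<open>l < N\<close>. The compression of \<open>S\<close> to \<open>E\<close> is
  \<open>\<rho> P\<^sub>E T\<close>, whence \<open>|\<langle>(S - T) x\<^sub>j, y\<^sub>j\<rangle>| \<le> 1 - \<rho> \<le> \<eta>\<close>. After \<open>N - 1\<close> steps the component
  \<open>\<surd>\<eta> \<parallel>x\<parallel>\<close> of \<open>S x\<close> along \<open>\<phi>\<^sub>N\<^sub>+\<^sub>1\<^sub>,\<^sub>0\<close> reaches \<open>\<phi>\<^sub>2\<^sub>N\<^sub>-\<^sub>1\<^sub>,\<^sub>0\<close>, which \<open>S\<close> sends to a unit
  vector \<open>\<omega>\<close> with \<open>P\<^sub>E \<omega> = d / (\<surd>\<eta> \<parallel>x\<parallel>)\<close>. Hence \<open>P\<^sub>E S\<^sup>N x = (\<rho> B)\<^sup>N x + d\<close>, and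
  \<open>d = t P\<^sub>E z - (\<rho> B)\<^sup>N x\<close> is small enough for \<open>\<omega>\<close> to exist once \<open>\<rho>\<^sup>N \<le> \<eta>/2\<close>. Then
  \<open>P\<^sub>E S\<^sup>N x = t P\<^sub>E z\<close>, i.e. \<open>\<langle>z - t\<^sup>-\<^sup>1 S\<^sup>N x, y\<^sub>j\<rangle> = 0\<close>.\<close>

context complex_hilbert
begin

lemma scaleC_zero_left [simp]: "0 *\<^sub>C x = 0"
  using scaleC_add_left[of 0 0 x] by simp

lemma scaleC_zero_right [simp]: "c *\<^sub>C 0 = 0"
  using scaleC_add_right[of c 0 0] by simp

lemma scaleC_minus_left: "(- c) *\<^sub>C x = - (c *\<^sub>C x)"
  using scaleC_add_left[of c "-c" x] by (simp add: add.commute eq_neg_iff_add_eq_0)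

lemma scaleC_diff_left: "(c - d) *\<^sub>C x = c *\<^sub>C x - d *\<^sub>C x"
  using scaleC_add_left[of c "-d" x] by (simp add: scaleC_minus_left)

lemma scaleC_sum_right: "c *\<^sub>C (\<Sum>i\<in>A. f i) = (\<Sum>i\<in>A. c *\<^sub>C f i)"
  by (induction A rule: infinite_finite_induct) (simp_all add: scaleC_add_right)

lemma scaleC_sum_left: "(\<Sum>i\<in>A. f i) *\<^sub>C x = (\<Sum>i\<in>A. f i *\<^sub>C x)"
  by (induction A rule: infinite_finite_induct) (simp_all add: scaleC_add_left)

end

locale hermitian_form =
  fixes q :: "'a::complex_hilbert \<Rightarrow> 'a \<Rightarrow> complex"
  assumes add_left: "q (x + y) z = q x z + q y z"
    and scaleC_left: "q (c *\<^sub>C x) y = c * q x y"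
    and commute: "q y x = cnj (q x y)"
    and self_nonneg: "0 \<le> Re (q x x)"
begin

lemma zero_left [simp]: "q 0 y = 0"
  using add_left[of 0 0 y] by simp

lemma zero_right [simp]: "q y 0 = 0"
  using commute[of 0 y] by simp

lemma add_right: "q x (y + z) = q x y + q x z"
  by (metis add_left commute complex_cnj_add)

lemma scaleC_right: "q x (c *\<^sub>C y) = cnj c * q x y"
  by (metis scaleC_left commute complex_cnj_mult)

lemma minus_left: "q (- x) y = - q x y"
  using add_left[of x "-x" y] by (simp add: add.commute eq_neg_iff_add_eq_0)

lemma diff_left: "q (x - y) z = q x z - q y z"
  using add_left[of x "-y" z] by (simp add: minus_left)

lemma diff_right: "q z (x - y) = q z x - q z y"
  by (metis commute complex_cnj_diff diff_left)

lemma sum_left: "q (\<Sum>i\<in>A. f i) y = (\<Sum>i\<in>A. q (f i) y)"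
  by (induction A rule: infinite_finite_induct) (simp_all add: add_left)

lemma sum_right: "q y (\<Sum>i\<in>A. f i) = (\<Sum>i\<in>A. q y (f i))"
  by (induction A rule: infinite_finite_induct) (simp_all add: add_right)

lemma self_eq_Re: "q x x = complex_of_real (Re (q x x))"
  using commute[of x x] by (simp add: complex_eq_iff)

text \<open>The degenerate case of the Cauchy--Schwarz inequality: expand
  \<open>0 \<le> q (r - s w) (r - s w)\<close> with \<open>s = t q r w\<close> for a small \<open>t > 0\<close>.\<close>
lemma eq_0_if_self_eq_0:
  assumes "q r r = 0"
  shows "q r w = 0"
proof -
  define a Q where "a = q r w" and "Q = Re (q w w)"
  have Q: "0 \<le> Q" "q w w = complex_of_real Q"
    using self_nonneg self_eq_Re unfolding Q_def by auto
  define t where "t = 1 / (Q + 1)"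
  have t: "0 < t" "t * Q < 1"
    using Q unfolding t_def by (simp_all add: field_simps)
  define s where "s = complex_of_real t * a"
  have "q (r - s *\<^sub>C w) (r - s *\<^sub>C w) = q r r - cnj s * a - s * cnj a + s * cnj s * q w w"
    unfolding a_def
    by (simp add: diff_left diff_right scaleC_left scaleC_right commute[of w r] algebra_simps)
  also have "\<dots> = complex_of_real (t * (t * Q - 2)) * (a * cnj a)"
    using assms Q unfolding s_def by (simp add: algebra_simps)
  also have "\<dots> = complex_of_real ((cmod a)\<^sup>2 * t * (t * Q - 2))"
    by (simp only: complex_norm_square[symmetric] of_real_mult of_real_power) (simp add: mult_ac)
  finally have "0 \<le> (cmod a)\<^sup>2 * t * (t * Q - 2)"
    using self_nonneg[of "r - s *\<^sub>C w"] by simp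
  moreover have "t * (t * Q - 2) < 0"
    using t by (simp add: mult_pos_neg)
  ultimately have "(cmod a)\<^sup>2 \<le> 0"
    by (metis mult.assoc mult_nonneg_nonneg mult_nonneg_nonpos mult_pos_neg
        not_less order.strict_iff_not zero_le_power2 order_antisym)
  then show ?thesis
    unfolding a_def by simp
qed

definition orthonormal :: "('i \<Rightarrow> 'a) \<Rightarrow> 'i set \<Rightarrow> bool" where
  "orthonormal g I \<longleftrightarrow> (\<forall>i\<in>I. \<forall>j\<in>I. q (g i) (g j) = (if i = j then 1 else 0))"

definition proj :: "(nat \<Rightarrow> 'a) \<Rightarrow> nat \<Rightarrow> 'a \<Rightarrow> 'a" where
  "proj g k v = (\<Sum>i<k. q v (g i) *\<^sub>C g i)"

definition in_radical :: "'a \<Rightarrow> bool" where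
  "in_radical r \<longleftrightarrow> (\<forall>w. q r w = 0)"

lemma proj_left:
  assumes "orthonormal g {..<k}" "j < k"
  shows "q (proj g k v) (g j) = q v (g j)"
proof -
  have "q (proj g k v) (g j) = (\<Sum>i<k. q v (g i) * q (g i) (g j))"
    unfolding proj_def by (simp add: sum_left scaleC_left)
  also have "\<dots> = (\<Sum>i<k. if i = j then q v (g j) else 0)"
    using assms unfolding orthonormal_def by (intro sum.cong) auto
  finally show ?thesis
    using assms by simp
qed

lemma proj_extend:
  assumes "orthonormal g {..<k'}" "k \<le> k'" "in_radical (v - proj g k v)"
  shows "proj g k' v = proj g k v"
proof -
  have "q v (g i) = 0" if "k \<le> i" "i < k'" for i
  proof -
    have "q (proj g k v) (g i) = (\<Sum>j<k. q v (g j) * q (g j) (g i))"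
      unfolding proj_def by (simp add: sum_left scaleC_left)
    also have "\<dots> = 0"
      using assms(1,2) that unfolding orthonormal_def by (intro sum.neutral) auto
    finally show ?thesis
      using assms(3) unfolding in_radical_def by (metis diff_left diff_zero)
  qed
  then have "(\<Sum>i\<in>{k..<k'}. q v (g i) *\<^sub>C g i) = 0"
    by (intro sum.neutral) auto
  moreover have "proj g k' v = proj g k v + (\<Sum>i\<in>{k..<k'}. q v (g i) *\<^sub>C g i)"
    unfolding proj_def using assms(2)
    by (metis atLeast0LessThan sum.atLeastLessThan_concat zero_le)
  ultimately show ?thesis
    by simp
qed

lemma proj_cong: "(\<And>i. i < k \<Longrightarrow> g' i = g i) \<Longrightarrow> proj g' k v = proj g k v"
  unfolding proj_def by simp

lemma orthonormal_extension_step: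
  assumes g: "orthonormal g {..<k}"
  shows "\<exists>g' k'. k \<le> k' \<and> (\<forall>i<k. g' i = g i) \<and> orthonormal g' {..<k'} \<and>
    in_radical (v - proj g' k' v)"
proof (cases "q (v - proj g k v) (v - proj g k v) = 0")
  case True
  then show ?thesis
    using g eq_0_if_self_eq_0 unfolding in_radical_def by blast
next
  case False
  define r where "r = v - proj g k v"
  define Q where "Q = Re (q r r)"
  have Q: "q r r = complex_of_real Q" "0 < Q"
    using False self_nonneg[of r] self_eq_Re[of r] unfolding r_def Q_def
    by (metis less_eq_real_def of_real_0)+
  define c where "c = 1 / sqrt Q"
  have ccQ: "c * c * Q = 1"
    unfolding c_def using Q by (simp add: field_simps)
  define g1 where "g1 = complex_of_real c *\<^sub>C r"
  have r_g: "q r (g j) = 0" "q (g j) r = 0" if "j < k" for j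
  proof -
    show "q r (g j) = 0"
      unfolding r_def using proj_left[OF g that] by (simp add: diff_left)
    then show "q (g j) r = 0"
      by (metis commute complex_cnj_zero)
  qed
  have g1_g1: "q g1 g1 = 1"
    unfolding g1_def using ccQ
    by (simp add: scaleC_left scaleC_right Q(1) mult.assoc[symmetric]) (metis of_real_1 of_real_mult)
  have "orthonormal (g(k := g1)) {..<Suc k}"
    using g g1_g1 r_g unfolding orthonormal_def g1_def
    by (auto simp: scaleC_left scaleC_right less_Suc_eq)
  moreover have "v - proj (g(k := g1)) (Suc k) v = 0"
  proof -
    have "q (proj g k v) g1 = 0"
      unfolding proj_def g1_def by (simp add: sum_left scaleC_left scaleC_right r_g)
    then have "q v g1 = complex_of_real c * q r r"
      unfolding g1_def r_def by (simp add: diff_left scaleC_right)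
    then have "q v g1 *\<^sub>C g1 = r"
      unfolding g1_def Q(1) using ccQ
      by (simp add: scaleC_scaleC mult_ac flip: of_real_mult) (simp add: scaleC_one)
    moreover have "proj (g(k := g1)) (Suc k) v = proj g k v + q v g1 *\<^sub>C g1"
      unfolding proj_def by simp
    ultimately show ?thesis
      unfolding r_def by simp
  qed
  ultimately show ?thesis
    unfolding in_radical_def by (intro exI[of _ "g(k := g1)"] exI[of _ "Suc k"]) auto
qed

text \<open>Gram--Schmidt for a possibly degenerate form.\<close>
lemma orthonormal_extension:
  assumes "orthonormal g {..<k}"
  shows "\<exists>g' k'. k \<le> k' \<and> (\<forall>i<k. g' i = g i) \<and> orthonormal g' {..<k'} \<and>
    (\<forall>v\<in>set vs. in_radical (v - proj g' k' v))"
  using assms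
proof (induction vs arbitrary: g k)
  case Nil
  then show ?case by auto
next
  case (Cons v vs)
  obtain G k1 where G: "k \<le> k1" "\<forall>i<k. G i = g i" "orthonormal G {..<k1}"
    "in_radical (v - proj G k1 v)"
    using orthonormal_extension_step[OF Cons.prems] by blast
  obtain g' k' where g': "k1 \<le> k'" "\<forall>i<k1. g' i = G i" "orthonormal g' {..<k'}"
    "\<forall>v\<in>set vs. in_radical (v - proj g' k' v)"
    using Cons.IH[OF G(3)] by blast
  have "proj g' k1 v = proj G k1 v"
    using g'(2) by (intro proj_cong) auto
  then have "proj g' k' v = proj g' k1 v"
    using G(4) by (intro proj_extend[OF g'(3,1)]) simp
  then have "in_radical (v - proj g' k' v)"
    using G(4) \<open>proj g' k1 v = proj G k1 v\<close> by simp
  then show ?case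
    using G(1,2) g' by (intro exI[of _ g'] exI[of _ k']) auto
qed

lemma gram_factorization:
  fixes v :: "nat \<Rightarrow> 'a" and m :: nat
  shows "\<exists>(r::nat) c. \<forall>i<m. \<forall>k<m. q (v i) (v k) = (\<Sum>j<r. c i j * cnj (c k j))"
proof -
  have "orthonormal (\<lambda>_. 0) {..<0::nat}"
    by (simp add: orthonormal_def)
  from orthonormal_extension[OF this, of "map v [0..<m]"]
  obtain g r where "\<forall>i<m. in_radical (v i - proj g r (v i))"
    by (auto simp: atLeast0LessThan)
  then have factor: "q (v i) (v k) = (\<Sum>j<r. q (v i) (g j) * cnj (q (v k) (g j)))"
    if "i < m" for i k
  proof -
    have "q (v i) (v k) = q (proj g r (v i)) (v k)"
      using that \<open>\<forall>i<m. _\<close> unfolding in_radical_def by (metis diff_left eq_iff_diff_eq_0)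
    then show ?thesis
      by (simp add: proj_def sum_left scaleC_left commute[of "g _" "v k"])
  qed
  show ?thesis
    by (intro exI[of _ r] exI[of _ "\<lambda>i j. q (v i) (g j)"] allI impI) (simp add: factor)
qed

end

interpretation cinner: hermitian_form "cinner :: 'a::complex_hilbert \<Rightarrow> 'a \<Rightarrow> complex"
  by unfold_locales (simp_all add: cinner_add_left cinner_scaleC_left cinner_commute[symmetric]
      cinner_self_norm)

lemma norm_sq_eq_Re_cinner: "(norm x)\<^sup>2 = Re (cinner x x)"
  by (simp add: cinner_self_norm)

lemma cinner_in_radical_iff: "cinner.in_radical w \<longleftrightarrow> w = 0"
proof
  assume "cinner.in_radical w"
  then have "cinner w w = 0"
    unfolding cinner.in_radical_def by blast
  then show "w = 0"
    by (simp add: cinner_self_norm)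
qed (simp add: cinner.in_radical_def)

lemma cinner_eq_0_commute: "cinner a b = 0 \<Longrightarrow> cinner b a = 0"
  by (metis cinner_commute complex_cnj_zero)

lemma norm_scaleC: "norm (c *\<^sub>C x) = cmod c * norm x"
proof -
  have "cinner (c *\<^sub>C x) (c *\<^sub>C x) = c * cnj c * cinner x x"
    by (simp add: cinner_scaleC_left cinner.scaleC_right mult.assoc)
  then have "(norm (c *\<^sub>C x))\<^sup>2 = Re (c * cnj c * cinner x x)"
    by (simp only: norm_sq_eq_Re_cinner)
  also have "\<dots> = (cmod c * norm x)\<^sup>2"
    by (simp only: complex_norm_square[symmetric] cinner_self_norm) (simp add: power_mult_distrib)
  finally show ?thesis
    by (simp add: power2_eq_iff_nonneg)
qed

lemma cinner_sum_orthonormal: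
  assumes "cinner.orthonormal b I" "finite I" "k \<in> I"
  shows "cinner (\<Sum>i\<in>I. c i *\<^sub>C b i) (b k) = c k"
proof -
  have "cinner (\<Sum>i\<in>I. c i *\<^sub>C b i) (b k) = (\<Sum>i\<in>I. c i * cinner (b i) (b k))"
    by (simp add: cinner.sum_left cinner_scaleC_left)
  also have "\<dots> = (\<Sum>i\<in>I. if i = k then c k else 0)"
    using assms unfolding cinner.orthonormal_def by (intro sum.cong) auto
  finally show ?thesis
    using assms by simp
qed

lemma cinner_sum_sum_orthonormal:
  assumes "cinner.orthonormal b I" "finite I"
  shows "cinner (\<Sum>i\<in>I. c i *\<^sub>C b i) (\<Sum>i\<in>I. d i *\<^sub>C b i) = (\<Sum>i\<in>I. c i * cnj (d i))"
proof -
  have "cinner (b i) (\<Sum>i\<in>I. d i *\<^sub>C b i) = cnj (d i)" if "i \<in> I" for i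
    using cinner_sum_orthonormal[OF assms that, of d] cinner_commute by metis
  then show ?thesis
    by (simp add: cinner.sum_left cinner_scaleC_left)
qed

lemma norm_sum_orthonormal_sq:
  assumes "cinner.orthonormal b I" "finite I"
  shows "(norm (\<Sum>i\<in>I. c i *\<^sub>C b i))\<^sup>2 = (\<Sum>i\<in>I. (cmod (c i))\<^sup>2)"
proof -
  have "(norm (\<Sum>i\<in>I. c i *\<^sub>C b i))\<^sup>2 = Re (\<Sum>i\<in>I. complex_of_real ((cmod (c i))\<^sup>2))"
    by (simp only: norm_sq_eq_Re_cinner cinner_sum_sum_orthonormal[OF assms] complex_norm_square)
  then show ?thesis
    by (simp flip: of_real_sum)
qed

lemma orthonormal_expansion:
  fixes m :: nat
  assumes "cinner.orthonormal e {..<m}" "v = (\<Sum>k<m. c k *\<^sub>C e k)"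
  shows "v = (\<Sum>k<m. cinner v (e k) *\<^sub>C e k)"
proof -
  have "cinner v (e k) = c k" if "k < m" for k
    using assms(2) cinner_sum_orthonormal[OF assms(1) finite_lessThan] that by simp
  then have "(\<Sum>k<m. cinner v (e k) *\<^sub>C e k) = (\<Sum>k<m. c k *\<^sub>C e k)"
    by simp
  with assms(2) show ?thesis
    by simp
qed

lemma pythagoras:
  assumes "cinner u v = 0"
  shows "(norm (u + v))\<^sup>2 = (norm u)\<^sup>2 + (norm v)\<^sup>2"
  using assms cinner_eq_0_commute[OF assms]
  by (simp add: norm_sq_eq_Re_cinner cinner_add_left cinner.add_right)

lemma bessel_inequality:
  assumes "cinner.orthonormal b I" "finite I"
  shows "(\<Sum>i\<in>I. (cmod (cinner u (b i)))\<^sup>2) \<le> (norm u)\<^sup>2"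
proof -
  define p where "p = (\<Sum>i\<in>I. cinner u (b i) *\<^sub>C b i)"
  have "cinner (u - p) (b k) = 0" if "k \<in> I" for k
    unfolding p_def using cinner_sum_orthonormal[OF assms that] by (simp add: cinner.diff_left)
  then have "cinner (u - p) p = 0"
    unfolding p_def by (simp add: cinner.sum_right cinner.scaleC_right)
  then have "(norm u)\<^sup>2 = (norm (u - p))\<^sup>2 + (norm p)\<^sup>2"
    using pythagoras[of "u - p" p] by simp
  moreover have "(norm p)\<^sup>2 = (\<Sum>i\<in>I. (cmod (cinner u (b i)))\<^sup>2)"
    unfolding p_def by (rule norm_sum_orthonormal_sq[OF assms])
  ultimately show ?thesis
    by simp
qed

lemma norm_cinner_le: "cmod (cinner x y) \<le> norm x * norm y"
proof (cases "y = 0")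
  case False
  define e where "e = complex_of_real (1 / norm y) *\<^sub>C y"
  have "norm e = 1"
    unfolding e_def using False by (simp add: norm_scaleC norm_divide)
  then have "cinner.orthonormal (\<lambda>_. e) {()}"
    unfolding cinner.orthonormal_def by (simp add: cinner_self_norm)
  from bessel_inequality[OF this, of x] have "cmod (cinner x e) \<le> norm x"
    by (simp add: power2_le_iff_abs_le)
  moreover have "cmod (cinner x y) = cmod (cinner x e) * norm y"
    unfolding e_def using False by (simp add: cinner.scaleC_right norm_mult norm_divide)
  ultimately show ?thesis
    by (simp add: mult_right_mono)
qed simp

lemma orthonormal_frame_extension:
  fixes g :: "nat \<Rightarrow> 'a::complex_hilbert"
  assumes "cinner.orthonormal g {..<k}"
  shows "\<exists>g' k'. k \<le> k' \<and> (\<forall>i<k. g' i = g i) \<and> cinner.orthonormal g' {..<k'} \<and>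
    (\<forall>v\<in>set vs. (\<Sum>i<k'. cinner v (g' i) *\<^sub>C g' i) = v)"
proof -
  obtain g' k' where "k \<le> k'" "\<forall>i<k. g' i = g i" "cinner.orthonormal g' {..<k'}"
    "\<forall>v\<in>set vs. cinner.in_radical (v - cinner.proj g' k' v)"
    using cinner.orthonormal_extension[OF assms] by blast
  then show ?thesis
    unfolding cinner_in_radical_iff cinner.proj_def right_minus_eq eq_commute[of _ "sum _ _"]
    by blast
qed

lemma cspan_scaleC: "v \<in> A \<Longrightarrow> c *\<^sub>C v \<in> cspan A"
  unfolding cspan_def by (rule CollectI, rule exI[of _ "{v}"], rule exI[of _ "\<lambda>_. c"]) simp

lemma cspan_mono: "A \<subseteq> B \<Longrightarrow> cspan A \<subseteq> cspan B"
  unfolding cspan_def by blast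

lemma cspan_add:
  assumes "u \<in> cspan A" "v \<in> cspan A"
  shows "u + v \<in> cspan A"
proof -
  obtain F1 c1 where 1: "finite F1" "F1 \<subseteq> A" "u = (\<Sum>b\<in>F1. c1 b *\<^sub>C b)"
    using assms(1) unfolding cspan_def by blast
  obtain F2 c2 where 2: "finite F2" "F2 \<subseteq> A" "v = (\<Sum>b\<in>F2. c2 b *\<^sub>C b)"
    using assms(2) unfolding cspan_def by blast
  define c where "c b = (if b \<in> F1 then c1 b else 0) + (if b \<in> F2 then c2 b else 0)" for b
  have "(\<Sum>b\<in>F1 \<union> F2. (if b \<in> F1 then c1 b else 0) *\<^sub>C b) = u"
    unfolding 1(3) by (rule sum.mono_neutral_cong_right) (use 1(1) 2(1) in auto)
  moreover have "(\<Sum>b\<in>F1 \<union> F2. (if b \<in> F2 then c2 b else 0) *\<^sub>C b) = v"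
    unfolding 2(3) by (rule sum.mono_neutral_cong_right) (use 1(1) 2(1) in auto)
  ultimately have "u + v = (\<Sum>b\<in>F1 \<union> F2. c b *\<^sub>C b)"
    unfolding c_def scaleC_add_left sum.distrib by simp
  moreover have "finite (F1 \<union> F2)" "F1 \<union> F2 \<subseteq> A"
    using 1(1,2) 2(1,2) by auto
  ultimately show ?thesis
    unfolding cspan_def by blast
qed

lemma sum_scaleC_mem_cspan:
  assumes "finite I"
  shows "(\<Sum>i\<in>I. c i *\<^sub>C s i) \<in> cspan (s ` I)"
  using assms
proof (induction I rule: finite_induct)
  case empty
  show ?case
    unfolding cspan_def by (rule CollectI, rule exI[of _ "{}"]) simp
next
  case (insert i I)
  have "(\<Sum>i\<in>I. c i *\<^sub>C s i) \<in> cspan (s ` insert i I)"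
    using insert.IH cspan_mono[of "s ` I" "s ` insert i I"] by blast
  moreover have "c i *\<^sub>C s i \<in> cspan (s ` insert i I)"
    by (rule cspan_scaleC) simp
  ultimately show ?case
    using insert by (simp add: cspan_add)
qed

text \<open>Infinite dimension is used only here: the finite orthonormal frame spanning \<open>A\<close> does not
  span the whole space.\<close>
lemma exists_unit_orthogonal:
  assumes "infinite_dimensional TYPE('a::complex_hilbert)" "finite (A :: 'a set)"
  shows "\<exists>v. norm v = 1 \<and> (\<forall>a\<in>A. cinner a v = 0)"
proof -
  obtain vs where vs: "set vs = A"
    using finite_list[OF assms(2)] by blast
  have "cinner.orthonormal (\<lambda>_. 0) {..<0::nat}"
    by (simp add: cinner.orthonormal_def)
  from orthonormal_frame_extension[OF this, of vs] obtain g :: "nat \<Rightarrow> 'a" and k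
    where g: "cinner.orthonormal g {..<k}"
    and A: "\<forall>a\<in>A. (\<Sum>i<k. cinner a (g i) *\<^sub>C g i) = a"
    unfolding vs by blast
  obtain v0 where v0: "v0 \<notin> cspan (g ` {..<k})"
    using assms(1) unfolding infinite_dimensional_def by blast
  define r where "r = v0 - (\<Sum>i<k. cinner v0 (g i) *\<^sub>C g i)"
  have "r \<noteq> 0"
  proof
    assume "r = 0"
    then have "(\<Sum>i<k. cinner v0 (g i) *\<^sub>C g i) = v0"
      unfolding r_def right_minus_eq by (rule sym)
    then show False
      using v0 sum_scaleC_mem_cspan[of "{..<k}" "\<lambda>i. cinner v0 (g i)" g] by simp
  qed
  have g_r: "cinner (g j) r = 0" if "j < k" for j
  proof (rule cinner_eq_0_commute)
    show "cinner r (g j) = 0"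
      using cinner_sum_orthonormal[OF g finite_lessThan, of j] that
      by (simp add: r_def cinner.diff_left)
  qed
  have "cinner a r = 0" if "a \<in> A" for a
  proof -
    have "cinner (\<Sum>i<k. cinner a (g i) *\<^sub>C g i) r = 0"
      by (simp add: cinner.sum_left cinner_scaleC_left g_r)
    then show ?thesis
      using A that by simp
  qed
  then show ?thesis
    using \<open>r \<noteq> 0\<close>
    by (intro exI[of _ "complex_of_real (1 / norm r) *\<^sub>C r"]) (simp add: norm_scaleC norm_divide cinner.scaleC_right)
qed

lemma exists_orthonormal_orthogonal:
  assumes "infinite_dimensional TYPE('a::complex_hilbert)" "finite (A :: 'a set)" "finite K"
  shows "\<exists>\<phi>. cinner.orthonormal \<phi> K \<and> (\<forall>i\<in>K. \<forall>a\<in>A. cinner a (\<phi> i) = 0)"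
  using assms(3)
proof (induction K rule: finite_induct)
  case empty
  then show ?case
    by (simp add: cinner.orthonormal_def)
next
  case (insert k K)
  obtain \<phi> where \<phi>: "cinner.orthonormal \<phi> K" "\<forall>i\<in>K. \<forall>a\<in>A. cinner a (\<phi> i) = 0"
    using insert.IH by blast
  obtain v where v: "norm v = 1" "\<forall>a\<in>A \<union> \<phi> ` K. cinner a v = 0"
    using exists_unit_orthogonal[OF assms(1), of "A \<union> \<phi> ` K"] assms(2) insert.hyps(1) by blast
  have \<phi>_v: "cinner (\<phi> i) v = 0" if "i \<in> K" for i
    using v(2) that by blast
  then have "cinner v (\<phi> i) = 0" if "i \<in> K" for i
    using that by (simp add: cinner_eq_0_commute)
  moreover have "cinner v v = 1"
    using v(1) by (simp add: cinner_self_norm)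
  ultimately have "cinner.orthonormal (\<phi>(k := v)) (insert k K)"
    using \<phi>(1) insert.hyps(2) \<phi>_v unfolding cinner.orthonormal_def by auto
  moreover have "\<forall>i\<in>insert k K. \<forall>a\<in>A. cinner a ((\<phi>(k := v)) i) = 0"
    using \<phi>(2) v(2) insert.hyps(2) by auto
  ultimately show ?case
    by blast
qed

definition partial_isometry :: "('i \<Rightarrow> 'a::complex_hilbert) \<Rightarrow> ('i \<Rightarrow> 'a) \<Rightarrow> 'i set \<Rightarrow> 'a \<Rightarrow> 'a" where
  "partial_isometry b s I u = (\<Sum>i\<in>I. cinner u (b i) *\<^sub>C s i)"

definition family_span :: "('i \<Rightarrow> 'a::complex_hilbert) \<Rightarrow> 'i set \<Rightarrow> 'a set" where
  "family_span b L = {v. \<exists>c. v = (\<Sum>p\<in>L. c p *\<^sub>C b p)}"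

lemma family_span_add: "u \<in> family_span b L \<Longrightarrow> v \<in> family_span b L \<Longrightarrow> u + v \<in> family_span b L"
  unfolding family_span_def
proof clarify
  fix c c'
  show "\<exists>c''. (\<Sum>p\<in>L. c p *\<^sub>C b p) + (\<Sum>p\<in>L. c' p *\<^sub>C b p) = (\<Sum>p\<in>L. c'' p *\<^sub>C b p)"
    by (rule exI[of _ "\<lambda>p. c p + c' p"]) (simp add: scaleC_add_left sum.distrib)
qed

lemma family_span_scaleC: "u \<in> family_span b L \<Longrightarrow> a *\<^sub>C u \<in> family_span b L"
  unfolding family_span_def
proof clarify
  fix c
  show "\<exists>c'. a *\<^sub>C (\<Sum>p\<in>L. c p *\<^sub>C b p) = (\<Sum>p\<in>L. c' p *\<^sub>C b p)"
    by (rule exI[of _ "\<lambda>p. a * c p"]) (simp add: scaleC_sum_right scaleC_scaleC)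
qed

lemma family_span_base:
  assumes "finite L" "p \<in> L"
  shows "b p \<in> family_span b L"
proof -
  have "(\<Sum>p'\<in>L. (if p' = p then 1 else 0) *\<^sub>C b p') = b p"
    using assms by (simp add: if_distrib[of "\<lambda>c. c *\<^sub>C _"] scaleC_one cong: if_cong)
  then show ?thesis
    unfolding family_span_def by (metis (mono_tags) mem_Collect_eq)
qed

lemma family_span_sum:
  "(\<And>i. i \<in> A \<Longrightarrow> f i \<in> family_span b L) \<Longrightarrow> (\<Sum>i\<in>A. f i) \<in> family_span b L"
proof (induction A rule: infinite_finite_induct)
  case (insert i A)
  then show ?case
    by (simp add: family_span_add)
qed (simp_all add: family_span_def exI[of _ "\<lambda>_. 0"])

context
  fixes b s :: "'i \<Rightarrow> 'a::complex_hilbert" and I :: "'i set"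
  assumes b: "cinner.orthonormal b I" and s: "cinner.orthonormal s I" and I: "finite I"
begin

lemma partial_isometry_clinear: "clinear_op (partial_isometry b s I)"
  unfolding clinear_op_def partial_isometry_def
  by (simp add: cinner_add_left scaleC_add_left sum.distrib cinner_scaleC_left scaleC_sum_right
      scaleC_scaleC)

lemma norm_partial_isometry_le: "norm (partial_isometry b s I u) \<le> norm u"
proof -
  have "(norm (partial_isometry b s I u))\<^sup>2 \<le> (norm u)\<^sup>2"
    unfolding partial_isometry_def norm_sum_orthonormal_sq[OF s I]
    by (rule bessel_inequality[OF b I])
  then show ?thesis
    by (simp add: power2_le_iff_abs_le)
qed

lemma partial_isometry_bounded: "bounded_op (partial_isometry b s I)"
  unfolding bounded_op_def using partial_isometry_clinear norm_partial_isometry_le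
  by (intro conjI exI[of _ 1]) auto

lemma onorm_partial_isometry_le: "onorm (partial_isometry b s I) \<le> 1"
  by (rule onorm_bound) (simp_all add: norm_partial_isometry_le)

lemma partial_isometry_finite_rank: "finite_rank (partial_isometry b s I)"
  unfolding finite_rank_def partial_isometry_def
  using I sum_scaleC_mem_cspan by (intro exI[of _ "s ` I"]) auto

lemma partial_isometry_sum:
  assumes "L \<subseteq> I"
  shows "partial_isometry b s I (\<Sum>p\<in>L. c p *\<^sub>C b p) = (\<Sum>p\<in>L. c p *\<^sub>C s p)"
proof -
  define c' where "c' p = (if p \<in> L then c p else 0)" for p
  have extend: "(\<Sum>p\<in>L. c p *\<^sub>C b p) = (\<Sum>p\<in>I. c' p *\<^sub>C b p)"
    "(\<Sum>p\<in>L. c p *\<^sub>C s p) = (\<Sum>p\<in>I. c' p *\<^sub>C s p)"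
    unfolding c'_def by (rule sum.mono_neutral_cong_left; use assms I in auto)+
  show ?thesis
    unfolding partial_isometry_def extend using cinner_sum_orthonormal[OF b I]
    by (intro sum.cong) auto
qed

lemma norm_partial_isometry_family_span:
  assumes "L \<subseteq> I" "v \<in> family_span b L"
  shows "norm (partial_isometry b s I v) = norm v"
proof -
  obtain c where v: "v = (\<Sum>p\<in>L. c p *\<^sub>C b p)"
    using assms(2) unfolding family_span_def by blast
  have "finite L" "cinner.orthonormal b L" "cinner.orthonormal s L"
    using b s I assms(1) finite_subset unfolding cinner.orthonormal_def by blast+
  then have "(norm (partial_isometry b s I v))\<^sup>2 = (norm v)\<^sup>2"
    unfolding v partial_isometry_sum[OF assms(1)] by (simp add: norm_sum_orthonormal_sq)
  then show ?thesis
    by (simp add: power2_eq_iff_nonneg)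
qed

end

lemma clinear_op_sum:
  assumes "clinear_op T"
  shows "T (\<Sum>i\<in>A. f i) = (\<Sum>i\<in>A. T (f i))"
proof -
  have "T 0 = 0"
    using assms unfolding clinear_op_def by (metis scaleC_zero_left)
  then show ?thesis
    using assms unfolding clinear_op_def by (induction A rule: infinite_finite_induct) simp_all
qed

lemma norm_le_if_onorm_le_1:
  assumes "bounded_op T" "onorm T \<le> 1"
  shows "norm (T u) \<le> norm u"
proof -
  obtain K where "\<forall>x. norm (T x) \<le> K * norm x"
    using assms(1) unfolding bounded_op_def by blast
  moreover have "T (x + y) = T x + T y" "T (r *\<^sub>R x) = r *\<^sub>R T x" for x y r
    using assms(1) unfolding bounded_op_def clinear_op_def by (simp_all add: scaleR_scaleC)
  ultimately have "bounded_linear T"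
    by (intro bounded_linear_intro[where K=K]) (simp_all add: mult.commute)
  then have "norm (T u) \<le> onorm T * norm u"
    by (rule onorm)
  also have "\<dots> \<le> norm u"
    using mult_right_mono[OF assms(2) norm_ge_zero[of u]] by simp
  finally show ?thesis .
qed

text \<open>The data of the construction: \<open>e\<close> is an orthonormal basis of \<open>E\<close> with \<open>e 0 = x/\<parallel>x\<parallel>\<close>, \<open>B = P\<^sub>E T\<close>,
  the fresh orthonormal vectors \<open>\<phi> (k, j)\<close> are indexed by a level \<open>k \<in> {1..2N+1}\<close> and a position
  \<open>j < w\<close>, \<open>D\<close> is the defect of \<open>B\<close> realised on level 1, and \<open>d \<in> E\<close> is the correction that the
  iterate \<open>S\<^sup>N x\<close> has to pick up.\<close>
locale shift_dilation =
  fixes T :: "'a::complex_hilbert \<Rightarrow> 'a" and x :: 'a and e :: "nat \<Rightarrow> 'a" and m :: nat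
    and \<phi> :: "nat \<times> nat \<Rightarrow> 'a" and N w :: nat and \<eta> :: real and D :: "nat \<Rightarrow> 'a" and d :: 'a
    and B :: "'a \<Rightarrow> 'a"
  assumes T_clinear: "clinear_op T" and norm_T_le: "\<And>u. norm (T u) \<le> norm u"
    and B_eq: "B = (\<lambda>u. \<Sum>k<m. cinner (T u) (e k) *\<^sub>C e k)"
    and e_orthonormal: "cinner.orthonormal e {..<m}" and m_pos: "0 < m"
    and x_eq: "x = complex_of_real (norm x) *\<^sub>C e 0" and x_nonzero: "x \<noteq> 0"
    and phi_orthonormal: "cinner.orthonormal \<phi> ({1..2*N+1} \<times> {..<w})"
    and e_phi_orthogonal: "\<And>p i. p \<in> {1..2*N+1} \<times> {..<w} \<Longrightarrow> i < m \<Longrightarrow> cinner (e i) (\<phi> p) = 0"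
    and N_ge_3: "3 \<le> N" and m_le_w: "m \<le> w"
    and eta_pos: "0 < \<eta>" and eta_le_half: "\<eta> \<le> 1/2"
    and D_span: "\<And>i. i < m \<Longrightarrow> \<exists>c. D i = (\<Sum>j<w. c j *\<^sub>C \<phi> (1, j))"
    and cinner_D_D: "\<And>i k. i < m \<Longrightarrow> k < m \<Longrightarrow>
        cinner (D i) (D k) = (if i = k then 1 else 0) - cinner (B (e i)) (B (e k))"
    and d_expansion: "d = (\<Sum>k<m. cinner d (e k) *\<^sub>C e k)"
    and norm_d_le: "norm d \<le> \<eta> * norm x"
begin

definition "K = {1..2*N+1} \<times> {..<w}"
definition "PE u = (\<Sum>k<m. cinner u (e k) *\<^sub>C e k)"
definition "in_E v \<longleftrightarrow> v = PE v"
definition "\<rho> = sqrt (1 - \<eta>)"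

text \<open>\<open>sE i\<close> is the image of \<open>e i\<close>: a unit vector since \<open>\<parallel>B e\<^sub>i\<parallel>\<^sup>2 + \<parallel>D e\<^sub>i\<parallel>\<^sup>2 = 1\<close>.
  \<open>\<omega>\<close> is the image of \<open>\<phi> (2N-1, 0)\<close>: its \<open>E\<close>-part \<open>d/c0\<close> produces the correction, its level
  \<open>N+1\<close> part makes it orthogonal to all \<open>sE i\<close>, and \<open>\<kappa> \<phi> (2N, 0)\<close> fills it up to a unit vector.\<close>
definition "c0 = sqrt \<eta> * norm x"
definition "sE i = complex_of_real \<rho> *\<^sub>C (B (e i) + D i) + complex_of_real (sqrt \<eta>) *\<^sub>C \<phi> (N+1, i)"
definition "coef i = - complex_of_real (\<rho> / (sqrt \<eta> * c0)) * cinner d (B (e i))"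
definition "\<omega>\<^sub>G = (\<Sum>i<m. coef i *\<^sub>C \<phi> (N+1, i))"
definition "\<omega>\<^sub>E\<^sub>G = complex_of_real (1 / c0) *\<^sub>C d + \<omega>\<^sub>G"
definition "\<kappa> = sqrt (1 - (norm \<omega>\<^sub>E\<^sub>G)\<^sup>2)"
definition "\<omega> = \<omega>\<^sub>E\<^sub>G + complex_of_real \<kappa> *\<^sub>C \<phi> (2*N, 0)"

lemma cinner_phi_phi: "p \<in> K \<Longrightarrow> q \<in> K \<Longrightarrow> cinner (\<phi> p) (\<phi> q) = (if p = q then 1 else 0)"
  using phi_orthonormal unfolding cinner.orthonormal_def K_def by blast

lemma cinner_e_e: "i < m \<Longrightarrow> k < m \<Longrightarrow> cinner (e i) (e k) = (if i = k then 1 else 0)"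
  using e_orthonormal unfolding cinner.orthonormal_def by blast

lemma cinner_phi_e: "p \<in> K \<Longrightarrow> i < m \<Longrightarrow> cinner (\<phi> p) (e i) = 0"
  using e_phi_orthogonal[of p i] cinner_commute[of "\<phi> p" "e i"] unfolding K_def by simp

lemma cinner_e_phi: "p \<in> K \<Longrightarrow> i < m \<Longrightarrow> cinner (e i) (\<phi> p) = 0"
  using e_phi_orthogonal[of p i] unfolding K_def by simp

lemma rho_sq: "\<rho> * \<rho> = 1 - \<eta>"
  unfolding \<rho>_def using eta_le_half by simp

lemma rho_pos: "0 < \<rho>"
  unfolding \<rho>_def using eta_le_half by simp

lemma rho_le: "\<rho> \<le> 1"
  unfolding \<rho>_def using eta_pos by simp

lemma sqrt_eta_mult_self: "sqrt \<eta> * sqrt \<eta> = \<eta>"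
  using eta_pos by simp

lemma c0_pos: "0 < c0"
  unfolding c0_def using eta_pos x_nonzero by simp

lemma B_PE: "B u = PE (T u)"
  unfolding B_eq PE_def by simp

lemma cinner_PE_e: "k < m \<Longrightarrow> cinner (PE u) (e k) = cinner u (e k)"
  unfolding PE_def using cinner_sum_orthonormal[OF e_orthonormal, of k] by simp

lemma PE_idem: "PE (PE u) = PE u"
proof -
  have "PE (PE u) = (\<Sum>k<m. cinner (PE u) (e k) *\<^sub>C e k)" by (rule PE_def)
  also have "\<dots> = (\<Sum>k<m. cinner u (e k) *\<^sub>C e k)" using cinner_PE_e by (intro sum.cong) auto
  also have "\<dots> = PE u" by (rule PE_def[symmetric])
  finally show ?thesis .
qed

lemma PE_in_E: "in_E (PE u)"
  unfolding in_E_def PE_idem ..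

lemma B_in_E: "in_E (B u)"
  unfolding B_PE by (rule PE_in_E)

lemma d_in_E: "in_E d"
  unfolding in_E_def PE_def using d_expansion .

lemma e_in_E: "i < m \<Longrightarrow> in_E (e i)"
proof -
  assume i: "i < m"
  have "PE (e i) = (\<Sum>k<m. (if k = i then 1 else 0) *\<^sub>C e k)"
    unfolding PE_def using cinner_e_e i by (intro sum.cong) auto
  also have "\<dots> = (\<Sum>k<m. if k = i then e i else 0)" by (intro sum.cong) (auto simp: scaleC_one)
  also have "\<dots> = e i" using i by simp
  finally show ?thesis unfolding in_E_def by simp
qed

lemma x_in_E: "in_E x"
proof -
  have "PE x = complex_of_real (norm x) *\<^sub>C PE (e 0)"
    unfolding PE_def x_eq[symmetric]
    by (subst x_eq) (simp add: cinner_scaleC_left scaleC_sum_right scaleC_scaleC)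
  also have "PE (e 0) = e 0" using e_in_E[OF m_pos] unfolding in_E_def by simp
  finally show ?thesis unfolding in_E_def using x_eq by simp
qed

lemma cinner_PE_left: "in_E y \<Longrightarrow> cinner (PE u) y = cinner u y"
proof -
  assume y: "in_E y"
  have "cinner (PE u) y = (\<Sum>k<m. cinner u (e k) * cinner (e k) y)"
    unfolding PE_def by (simp add: cinner.sum_left cinner_scaleC_left)
  also have "\<dots> = cinner u (PE y)"
    unfolding PE_def by (simp add: cinner.sum_right cinner.scaleC_right, intro sum.cong refl)
      (metis cinner_commute mult.commute)
  finally show ?thesis using y unfolding in_E_def by simp
qed

lemma cinner_E_phi: "in_E y \<Longrightarrow> p \<in> K \<Longrightarrow> cinner y (\<phi> p) = 0"
proof -
  assume "in_E y" "p \<in> K"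
  then have "cinner y (\<phi> p) = cinner (PE y) (\<phi> p)" unfolding in_E_def by simp
  also have "\<dots> = 0" unfolding PE_def using cinner_e_phi[OF \<open>p \<in> K\<close>]
    by (simp add: cinner.sum_left cinner_scaleC_left)
  finally show ?thesis .
qed

lemma cinner_phi_E: "in_E y \<Longrightarrow> p \<in> K \<Longrightarrow> cinner (\<phi> p) y = 0"
  using cinner_E_phi cinner_commute by (metis complex_cnj_zero)

lemma cinner_D_phi: "i < m \<Longrightarrow> q \<in> K \<Longrightarrow> fst q \<noteq> 1 \<Longrightarrow> cinner (D i) (\<phi> q) = 0"
proof -
  assume i: "i < m" and q: "q \<in> K" "fst q \<noteq> 1"
  obtain c where c: "D i = (\<Sum>j<w. c j *\<^sub>C \<phi> (1, j))" using D_span[OF i] by blast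
  have "cinner (D i) (\<phi> q) = (\<Sum>j<w. c j * cinner (\<phi> (1, j)) (\<phi> q))"
    unfolding c by (simp add: cinner.sum_left cinner_scaleC_left)
  also have "\<dots> = 0"
  proof (intro sum.neutral ballI)
    fix j assume "j \<in> {..<w}"
    then have "(1, j) \<in> K" using N_ge_3 unfolding K_def by auto
    then show "c j * cinner (\<phi> (1, j)) (\<phi> q) = 0" using cinner_phi_phi q by auto
  qed
  finally show ?thesis .
qed

lemma cinner_phi_D: "i < m \<Longrightarrow> q \<in> K \<Longrightarrow> fst q \<noteq> 1 \<Longrightarrow> cinner (\<phi> q) (D i) = 0"
  using cinner_D_phi cinner_commute by (metis complex_cnj_zero)

lemma cinner_D_E: "i < m \<Longrightarrow> in_E y \<Longrightarrow> cinner (D i) y = 0"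
proof -
  assume i: "i < m" and y: "in_E y"
  obtain c where c: "D i = (\<Sum>j<w. c j *\<^sub>C \<phi> (1, j))" using D_span[OF i] by blast
  have "cinner (D i) y = (\<Sum>j<w. c j * cinner (\<phi> (1, j)) y)"
    unfolding c by (simp add: cinner.sum_left cinner_scaleC_left)
  also have "\<dots> = 0"
  proof (intro sum.neutral ballI)
    fix j assume "j \<in> {..<w}"
    then have "(1, j) \<in> K" using N_ge_3 unfolding K_def by auto
    then show "c j * cinner (\<phi> (1, j)) y = 0" using cinner_phi_E[OF y] by simp
  qed
  finally show ?thesis .
qed

lemma cinner_E_D: "i < m \<Longrightarrow> in_E y \<Longrightarrow> cinner y (D i) = 0"
  using cinner_D_E cinner_commute by (metis complex_cnj_zero)

lemma T_sum: "T (\<Sum>i\<in>A. f i) = (\<Sum>i\<in>A. T (f i))"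
  by (rule clinear_op_sum[OF T_clinear])

lemma T_scale: "T (c *\<^sub>C u) = c *\<^sub>C T u"
  using T_clinear unfolding clinear_op_def by blast

lemma B_sum: "B (\<Sum>i\<in>A. f i) = (\<Sum>i\<in>A. B (f i))"
  unfolding B_eq T_sum by (simp add: cinner.sum_left scaleC_sum_left sum.swap[of _ A])

lemma B_scale: "B (c *\<^sub>C u) = c *\<^sub>C B u"
  unfolding B_eq T_scale by (simp add: cinner_scaleC_left scaleC_sum_right scaleC_scaleC)

lemma norm_PE_le: "norm (PE u) \<le> norm u"
proof -
  have "(norm (PE u))\<^sup>2 = (\<Sum>k<m. (cmod (cinner u (e k)))\<^sup>2)"
    unfolding PE_def by (rule norm_sum_orthonormal_sq[OF e_orthonormal]) simp
  also have "\<dots> \<le> (norm u)\<^sup>2" by (rule bessel_inequality[OF e_orthonormal]) simp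
  finally show ?thesis by (simp add: power2_le_iff_abs_le)
qed

lemma norm_B_le: "norm (B u) \<le> norm u"
  unfolding B_PE using norm_PE_le[of "T u"] norm_T_le[of u] by linarith

lemma w_pos: "0 < w"
  using m_pos m_le_w by simp

lemma mem_K: "1 \<le> k \<Longrightarrow> k \<le> 2*N+1 \<Longrightarrow> i < w \<Longrightarrow> (k, i) \<in> K"
  unfolding K_def by simp

lemma cinner_sE_left: "cinner (sE i) y = complex_of_real \<rho> * (cinner (B (e i)) y + cinner (D i) y)
    + complex_of_real (sqrt \<eta>) * cinner (\<phi> (N+1, i)) y"
  by (simp add: sE_def cinner_add_left cinner_scaleC_left)

lemma cinner_sE_right: "cinner y (sE i) = complex_of_real \<rho> * (cinner y (B (e i)) + cinner y (D i))
    + complex_of_real (sqrt \<eta>) * cinner y (\<phi> (N+1, i))"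
  by (simp add: sE_def cinner.add_right cinner.scaleC_right)

lemma N1_in_K: "i < m \<Longrightarrow> (N+1, i) \<in> K"
  using m_le_w by (intro mem_K) auto

lemma cinner_sE_sE:
  assumes "i < m" "k < m"
  shows "cinner (sE i) (sE k) = (if i = k then 1 else 0)"
proof -
  have Ni: "(N+1, i) \<in> K" and Nk: "(N+1, k) \<in> K" using N1_in_K assms by auto
  have a: "cinner (B (e i)) (sE k) = complex_of_real \<rho> * cinner (B (e i)) (B (e k))"
    unfolding cinner_sE_right using cinner_E_D[OF assms(2) B_in_E] cinner_E_phi[OF B_in_E Nk]
    by simp
  have b: "cinner (D i) (sE k) = complex_of_real \<rho> * cinner (D i) (D k)"
    unfolding cinner_sE_right
    using cinner_D_E[OF assms(1) B_in_E] cinner_D_phi[OF assms(1) Nk] N_ge_3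
    by simp
  have c: "cinner (\<phi> (N+1, i)) (sE k) = complex_of_real (sqrt \<eta>) * (if i = k then 1 else 0)"
    unfolding cinner_sE_right
    using cinner_phi_E[OF B_in_E Ni] cinner_phi_D[OF assms(2) Ni] cinner_phi_phi[OF Ni Nk] N_ge_3
    by simp
  have "cinner (sE i) (sE k) = complex_of_real \<rho> * (complex_of_real \<rho> * cinner (B (e i)) (B (e k))
        + complex_of_real \<rho> * cinner (D i) (D k))
       + complex_of_real (sqrt \<eta>) * (complex_of_real (sqrt \<eta>) * (if i = k then 1 else 0))"
    by (simp only: cinner_sE_left a b c)
  also have "\<dots> = complex_of_real (\<rho> * \<rho>) * (cinner (B (e i)) (B (e k)) + cinner (D i) (D k))
       + complex_of_real (sqrt \<eta> * sqrt \<eta>) * (if i = k then 1 else 0)"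
    by (simp only: of_real_mult) (simp add: algebra_simps)
  also have "\<dots> = complex_of_real (1 - \<eta>) * (if i = k then 1 else 0) + complex_of_real \<eta> * (if i = k then 1 else 0)"
    unfolding rho_sq sqrt_eta_mult_self cinner_D_D[OF assms] by simp
  also have "\<dots> = (if i = k then 1 else 0)" by (simp add: algebra_simps)
  finally show ?thesis .
qed

lemma cinner_sE_phi: assumes "i < m" "q \<in> K" "fst q \<noteq> 1" "fst q \<noteq> N+1"
  shows "cinner (sE i) (\<phi> q) = 0"
proof -
  have "(N+1, i) \<noteq> q" using assms by auto
  then show ?thesis unfolding cinner_sE_left
    using cinner_E_phi[OF B_in_E assms(2)] cinner_D_phi[OF assms(1,2,3)] cinner_phi_phi[OF N1_in_K[OF assms(1)] assms(2)]
    by simp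
qed

lemma sum_cinner_d_B_le: "(\<Sum>i<m. (cmod (cinner d (B (e i))))\<^sup>2) \<le> (norm d)\<^sup>2"
proof -
  define c where "c i = cinner d (B (e i))" for i
  define v where "v = (\<Sum>i<m. c i *\<^sub>C e i)"
  define S2 where "S2 = (\<Sum>i<m. (cmod (c i))\<^sup>2)"
  have S20: "0 \<le> S2" unfolding S2_def by (simp add: sum_nonneg)
  have nv: "(norm v)\<^sup>2 = S2" unfolding v_def S2_def
    by (rule norm_sum_orthonormal_sq[OF e_orthonormal]) simp
  have "cinner (B v) d = (\<Sum>i<m. c i * cinner (B (e i)) d)"
    unfolding v_def B_sum B_scale by (simp add: cinner.sum_left cinner_scaleC_left)
  also have "\<dots> = (\<Sum>i<m. complex_of_real ((cmod (c i))\<^sup>2))"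
    unfolding c_def
    by (intro sum.cong refl) (simp add: cinner_commute[of "B (e _)" d] flip: of_real_power complex_norm_square)
  finally have Bvd: "cinner (B v) d = complex_of_real S2" unfolding S2_def by simp
  have "S2 \<le> norm (B v) * norm d" using norm_cinner_le[of "B v" d] Bvd S20 by simp
  also have "\<dots> \<le> norm v * norm d" by (rule mult_right_mono[OF norm_B_le norm_ge_zero])
  moreover have "sqrt S2 = norm v"
  proof -
    have "sqrt S2 = sqrt ((norm v)\<^sup>2)" using nv by simp
    then show ?thesis by simp
  qed
  ultimately have h: "S2 \<le> sqrt S2 * norm d" by simp
  have "sqrt S2 \<le> norm d"
  proof (cases "S2 = 0")
    case True then show ?thesis by simp
  next
    case False
    then have "0 < sqrt S2" using S20 by simp
    moreover have "sqrt S2 * sqrt S2 \<le> sqrt S2 * norm d" using h S20 by simp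
    ultimately show ?thesis by (meson mult_left_le_imp_le)
  qed
  then have "(sqrt S2)\<^sup>2 \<le> (norm d)\<^sup>2" by (rule power_mono) (use S20 in simp)
  then have "S2 \<le> (norm d)\<^sup>2" using S20 by simp
  then show ?thesis unfolding S2_def c_def .
qed

lemma phi_N1_orthonormal: "cinner.orthonormal (\<lambda>i. \<phi> (N+1, i)) {..<m}"
  unfolding cinner.orthonormal_def using cinner_phi_phi N1_in_K by auto

lemma cinner_d_phi: "p \<in> K \<Longrightarrow> cinner d (\<phi> p) = 0"
  by (rule cinner_E_phi[OF d_in_E])

lemma norm_omegaG_sq: "(norm \<omega>\<^sub>G)\<^sup>2 = (\<Sum>i<m. (cmod (coef i))\<^sup>2)"
  unfolding \<omega>\<^sub>G_def by (rule norm_sum_orthonormal_sq[OF phi_N1_orthonormal]) simp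

lemma norm_omegaEG_le: "(norm \<omega>\<^sub>E\<^sub>G)\<^sup>2 \<le> 1"
proof -
  have "cinner (complex_of_real (1 / c0) *\<^sub>C d) \<omega>\<^sub>G = 0"
    unfolding \<omega>\<^sub>G_def using cinner_d_phi N1_in_K
    by (simp add: cinner.sum_right cinner.scaleC_right cinner_scaleC_left)
  then have p1: "(norm \<omega>\<^sub>E\<^sub>G)\<^sup>2 = (norm (complex_of_real (1 / c0) *\<^sub>C d))\<^sup>2 + (norm \<omega>\<^sub>G)\<^sup>2"
    unfolding \<omega>\<^sub>E\<^sub>G_def by (rule pythagoras)
  have p2: "(norm (complex_of_real (1 / c0) *\<^sub>C d))\<^sup>2 = (norm d)\<^sup>2 / c0\<^sup>2"
    using c0_pos by (simp add: norm_scaleC norm_divide power_divide)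
  have "(norm \<omega>\<^sub>G)\<^sup>2 = (\<rho> / (sqrt \<eta> * c0))\<^sup>2 * (\<Sum>i<m. (cmod (cinner d (B (e i))))\<^sup>2)"
    unfolding norm_omegaG_sq coef_def sum_distrib_left using rho_pos eta_pos c0_pos
    by (intro sum.cong refl) (simp add: norm_mult norm_divide power_mult_distrib power_divide)
  also have "\<dots> \<le> (\<rho> / (sqrt \<eta> * c0))\<^sup>2 * (norm d)\<^sup>2"
    by (rule mult_left_mono[OF sum_cinner_d_B_le]) simp
  also have "(\<rho> / (sqrt \<eta> * c0))\<^sup>2 * (norm d)\<^sup>2 = (1 - \<eta>) / \<eta> * ((norm d)\<^sup>2 / c0\<^sup>2)"
    using eta_pos c0_pos rho_sq by (simp add: power_divide power_mult_distrib power2_eq_square)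
  finally have p3: "(norm \<omega>\<^sub>G)\<^sup>2 \<le> (1 - \<eta>) / \<eta> * ((norm d)\<^sup>2 / c0\<^sup>2)" .
  have h0: "(norm \<omega>\<^sub>E\<^sub>G)\<^sup>2 \<le> (norm d)\<^sup>2 / c0\<^sup>2 + (1 - \<eta>) / \<eta> * ((norm d)\<^sup>2 / c0\<^sup>2)"
    using p1 p2 p3 by linarith
  have "(norm d)\<^sup>2 / c0\<^sup>2 + (1 - \<eta>) / \<eta> * ((norm d)\<^sup>2 / c0\<^sup>2) = (norm d)\<^sup>2 / c0\<^sup>2 / \<eta>"
    using eta_pos c0_pos by (simp add: field_simps)
  with h0 have h: "(norm \<omega>\<^sub>E\<^sub>G)\<^sup>2 \<le> (norm d)\<^sup>2 / c0\<^sup>2 / \<eta>" by simp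
  have "(norm d)\<^sup>2 \<le> (\<eta> * norm x)\<^sup>2" using norm_d_le by (simp add: power_mono)
  also have "\<dots> = \<eta> * c0\<^sup>2" unfolding c0_def using eta_pos
    by (simp add: power_mult_distrib power2_eq_square)
  finally have "(norm d)\<^sup>2 / c0\<^sup>2 / \<eta> \<le> 1" using eta_pos c0_pos by (simp add: field_simps)
  then show ?thesis using h by linarith
qed

lemma twoN_in_K: "(2*N, 0) \<in> K"
  using w_pos N_ge_3 by (intro mem_K) auto

lemma cinner_omegaEG_phi: "cinner \<omega>\<^sub>E\<^sub>G (\<phi> (2*N, 0)) = 0"
proof -
  have "cinner (\<phi> (N+1, i)) (\<phi> (2*N, 0)) = 0" if "i < m" for i
    using cinner_phi_phi[OF N1_in_K[OF that] twoN_in_K] N_ge_3 by auto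
  then show ?thesis unfolding \<omega>\<^sub>E\<^sub>G_def \<omega>\<^sub>G_def using cinner_d_phi[OF twoN_in_K]
    by (simp add: cinner_add_left cinner.sum_left cinner_scaleC_left)
qed

lemma cinner_omega_omega: "cinner \<omega> \<omega> = 1"
proof -
  have "(norm \<omega>)\<^sup>2 = (norm \<omega>\<^sub>E\<^sub>G)\<^sup>2 + (norm (complex_of_real \<kappa> *\<^sub>C \<phi> (2*N, 0)))\<^sup>2"
    unfolding \<omega>_def by (rule pythagoras) (simp add: cinner.scaleC_right cinner_omegaEG_phi)
  also have "norm (\<phi> (2*N, 0)) = 1"
  proof -
    have "complex_of_real ((norm (\<phi> (2*N, 0)))\<^sup>2) = 1"
      using cinner_phi_phi[OF twoN_in_K twoN_in_K] cinner_self_norm[of "\<phi> (2*N, 0)"] by simp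
    then have "(norm (\<phi> (2*N, 0)))\<^sup>2 = 1" by (simp only: of_real_eq_1_iff)
    then show ?thesis using norm_ge_zero[of "\<phi> (2*N, 0)"] by (simp add: power2_eq_1_iff)
  qed
  then have "(norm (complex_of_real \<kappa> *\<^sub>C \<phi> (2*N, 0)))\<^sup>2 = \<kappa>\<^sup>2" by (simp add: norm_scaleC)
  also have "\<kappa>\<^sup>2 = 1 - (norm \<omega>\<^sub>E\<^sub>G)\<^sup>2" unfolding \<kappa>_def using norm_omegaEG_le by simp
  finally have "(norm \<omega>)\<^sup>2 = 1" by simp
  then show ?thesis by (simp add: cinner_self_norm)
qed

lemma cinner_omegaG_right: "cinner y \<omega>\<^sub>G = (\<Sum>k<m. cnj (coef k) * cinner y (\<phi> (N+1, k)))"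
  unfolding \<omega>\<^sub>G_def by (simp add: cinner.sum_right cinner.scaleC_right)

lemma cinner_omega_right:
  "cinner y \<omega> = complex_of_real (1 / c0) * cinner y d + cinner y \<omega>\<^sub>G
    + complex_of_real \<kappa> * cinner y (\<phi> (2*N, 0))"
  unfolding \<omega>_def \<omega>\<^sub>E\<^sub>G_def by (simp add: cinner.add_right cinner.scaleC_right)

lemma cinner_sE_omega:
  assumes "i < m"
  shows "cinner (sE i) \<omega> = 0"
proof -
  have Ni: "(N+1, i) \<in> K" using N1_in_K assms by auto
  have a: "cinner (B (e i)) \<omega> = complex_of_real (1 / c0) * cinner (B (e i)) d"
    unfolding cinner_omega_right cinner_omegaG_right using cinner_E_phi[OF B_in_E] N1_in_K twoN_in_K
    by simp
  have b: "cinner (D i) \<omega> = 0"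
    unfolding cinner_omega_right cinner_omegaG_right
    using cinner_D_E[OF assms d_in_E] cinner_D_phi[OF assms] N1_in_K twoN_in_K N_ge_3
    by simp
  have c: "cinner (\<phi> (N+1, i)) \<omega> = cnj (coef i)"
  proof -
    have "cinner (\<phi> (N+1, i)) \<omega>\<^sub>G = (\<Sum>k<m. if k = i then cnj (coef i) else 0)"
      unfolding cinner_omegaG_right using cinner_phi_phi[OF Ni] N1_in_K by (intro sum.cong) auto
    also have "\<dots> = cnj (coef i)" using assms by simp
    finally show ?thesis
      unfolding cinner_omega_right using cinner_phi_E[OF d_in_E Ni] cinner_phi_phi[OF Ni twoN_in_K] N_ge_3
      by simp
  qed
  have cc: "cnj (coef i) = - complex_of_real (\<rho> / (sqrt \<eta> * c0)) * cinner (B (e i)) d"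
    unfolding coef_def using cinner_commute[of "B (e i)" d] by simp
  have "cinner (sE i) \<omega> = complex_of_real (\<rho> / c0) * cinner (B (e i)) d
      - complex_of_real (sqrt \<eta> * (\<rho> / (sqrt \<eta> * c0))) * cinner (B (e i)) d"
    unfolding cinner_sE_left a b c cc by (simp add: algebra_simps)
  also have "sqrt \<eta> * (\<rho> / (sqrt \<eta> * c0)) = \<rho> / c0" using eta_pos by simp
  finally show ?thesis by simp
qed

lemma cinner_omega_phi:
  assumes "q \<in> K" "fst q \<noteq> N+1" "fst q \<noteq> 2*N"
  shows "cinner \<omega> (\<phi> q) = 0"
proof -
  have "cinner \<omega>\<^sub>G (\<phi> q) = 0"
    unfolding \<omega>\<^sub>G_def using cinner_phi_phi[OF N1_in_K assms(1)] assms(2)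
    by (auto simp: cinner.sum_left cinner_scaleC_left intro!: sum.neutral)
  moreover have "cinner (\<phi> (2*N, 0)) (\<phi> q) = 0" using cinner_phi_phi[OF twoN_in_K assms(1)] assms(3)
    by auto
  ultimately show ?thesis unfolding \<omega>_def \<omega>\<^sub>E\<^sub>G_def using cinner_d_phi[OF assms(1)]
    by (simp add: cinner_add_left cinner_scaleC_left)
qed

text \<open>Level 0 stands
  for \<open>E\<close>; the fresh levels \<open>1..N-1\<close> and \<open>N+1..2N-1\<close> are shifted one level up, except that the top
  level \<open>2N-1\<close> of the second chain is sent to level \<open>2N+1\<close>, or to \<open>\<omega>\<close> at position 0.\<close>
definition "I = {0} \<times> {..<m} \<union> {1..N-1} \<times> {..<w} \<union> {N+1..2*N-1} \<times> {..<w}"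
definition "src p = (if fst p = 0 then e (snd p) else \<phi> p)"
definition "\<sigma> p = (if fst p = 2*N-1 then (2*N+1, snd p) else (fst p + 1, snd p))"
definition "tgt p = (if fst p = 0 then sE (snd p) else if p = (2*N-1, 0) then \<omega> else \<phi> (\<sigma> p))"
definition "S = partial_isometry src tgt I"

definition "regular p \<longleftrightarrow> p \<in> I \<and> fst p \<noteq> 0 \<and> p \<noteq> (2*N-1, 0)"

lemma finite_I: "finite I"
  unfolding I_def by simp

lemma I_level_0: "p \<in> I \<Longrightarrow> fst p = 0 \<Longrightarrow> snd p < m"
  unfolding I_def by auto

lemma I_in_K: "p \<in> I \<Longrightarrow> fst p \<noteq> 0 \<Longrightarrow> p \<in> K"
  unfolding I_def K_def using N_ge_3 by auto

lemma corner_in_I: "(2*N-1, 0) \<in> I"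
  unfolding I_def using N_ge_3 w_pos by auto

lemma sigma_in_K: "regular p \<Longrightarrow> \<sigma> p \<in> K"
  unfolding regular_def I_def K_def \<sigma>_def using N_ge_3 by auto

lemma fst_sigma: "regular p \<Longrightarrow> fst (\<sigma> p) \<noteq> 1 \<and> fst (\<sigma> p) \<noteq> N+1 \<and> fst (\<sigma> p) \<noteq> 2*N"
  unfolding regular_def I_def \<sigma>_def using N_ge_3 by auto

lemma sigma_inj: "regular p \<Longrightarrow> regular q \<Longrightarrow> \<sigma> p = \<sigma> q \<Longrightarrow> p = q"
  unfolding regular_def I_def \<sigma>_def using N_ge_3 by (auto simp: prod_eq_iff split: if_splits)

lemma src_orthonormal: "cinner.orthonormal src I"
  unfolding cinner.orthonormal_def
proof (intro ballI)
  fix p q assume p: "p \<in> I" and q: "q \<in> I"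
  show "cinner (src p) (src q) = (if p = q then 1 else 0)"
  proof (cases "fst p = 0")
    case True
    note pE = I_level_0[OF p True]
    show ?thesis
    proof (cases "fst q = 0")
      case True
      then show ?thesis using pE I_level_0[OF q True] \<open>fst p = 0\<close> cinner_e_e unfolding src_def
        by (auto simp: prod_eq_iff)
    next
      case False
      then show ?thesis using cinner_e_phi[OF I_in_K[OF q False] pE] \<open>fst p = 0\<close> unfolding src_def
        by auto
    qed
  next
    case False
    note pK = I_in_K[OF p False]
    show ?thesis
    proof (cases "fst q = 0")
      case True
      then show ?thesis using cinner_phi_e[OF pK I_level_0[OF q True]] \<open>fst p \<noteq> 0\<close> unfolding src_def
        by auto
    next
      case False
      then show ?thesis using cinner_phi_phi[OF pK I_in_K[OF q False]] \<open>fst p \<noteq> 0\<close> unfolding src_def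
        by auto
    qed
  qed
qed

lemma tgt_level_0: "fst p = 0 \<Longrightarrow> tgt p = sE (snd p)"
  unfolding tgt_def by simp

lemma tgt_corner: "tgt (2*N-1, 0) = \<omega>"
  unfolding tgt_def using N_ge_3 by simp

lemma tgt_regular: "regular p \<Longrightarrow> tgt p = \<phi> (\<sigma> p)"
  unfolding tgt_def regular_def by simp

lemma I_cases [consumes 1, case_names level_0 corner regular]:
  assumes "p \<in> I"
  obtains "fst p = 0" | "p = (2*N-1, 0)" | "regular p"
  using assms unfolding regular_def by auto

lemma cinner_tgt_level_0:
  assumes p: "p \<in> I" "fst p = 0" and q: "q \<in> I"
  shows "cinner (tgt p) (tgt q) = (if p = q then 1 else 0)"
  using q
proof (cases rule: I_cases)
  case level_0
  then show ?thesis
    using p q I_level_0 cinner_sE_sE tgt_level_0 by (auto simp: prod_eq_iff)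
next
  case corner
  then show ?thesis
    using p tgt_level_0 tgt_corner cinner_sE_omega[OF I_level_0[OF p]] N_ge_3 by auto
next
  case regular
  then show ?thesis
    using p tgt_level_0 tgt_regular cinner_sE_phi[OF I_level_0[OF p] sigma_in_K] fst_sigma
    by (auto simp: regular_def)
qed

lemma cinner_tgt_corner:
  assumes q: "q \<in> I"
  shows "cinner (tgt (2*N-1, 0)) (tgt q) = (if (2*N-1, 0) = q then 1 else 0)"
  using q
proof (cases rule: I_cases)
  case level_0
  then show ?thesis
    using cinner_tgt_level_0[OF q level_0 corner_in_I] cinner_eq_0_commute by auto
next
  case corner
  then show ?thesis
    using tgt_corner cinner_omega_omega by simp
next
  case regular
  then show ?thesis
    using tgt_corner tgt_regular cinner_omega_phi[OF sigma_in_K] fst_sigma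
    by (auto simp: regular_def)
qed

lemma tgt_orthonormal: "cinner.orthonormal tgt I"
  unfolding cinner.orthonormal_def
proof (intro ballI)
  fix p q
  assume p: "p \<in> I" and q: "q \<in> I"
  show "cinner (tgt p) (tgt q) = (if p = q then 1 else 0)"
    using p
  proof (cases rule: I_cases)
    case level_0
    then show ?thesis
      using cinner_tgt_level_0 p q by blast
  next
    case corner
    then show ?thesis
      using cinner_tgt_corner[OF q] by simp
  next
    case regular
    show ?thesis
      using q
    proof (cases rule: I_cases)
      case level_0
      then show ?thesis
        using cinner_tgt_level_0[OF q level_0 p] cinner_eq_0_commute by auto
    next
      case corner
      then show ?thesis
        using cinner_tgt_corner[OF p] cinner_eq_0_commute by auto
    next
      case q_regular: regular
      then show ?thesis
        using regular tgt_regular cinner_phi_phi[OF sigma_in_K sigma_in_K] sigma_inj by auto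
    qed
  qed
qed

lemma S_bounded: "bounded_op S"
  unfolding S_def by (rule partial_isometry_bounded[OF src_orthonormal tgt_orthonormal finite_I])

lemma S_onorm: "onorm S \<le> 1"
  unfolding S_def by (rule onorm_partial_isometry_le[OF src_orthonormal tgt_orthonormal finite_I])

lemma S_finite_rank: "finite_rank S"
  unfolding S_def
  by (rule partial_isometry_finite_rank[OF src_orthonormal tgt_orthonormal finite_I])

lemma S_src: "p \<in> I \<Longrightarrow> S (src p) = tgt p"
  using partial_isometry_sum[OF src_orthonormal tgt_orthonormal finite_I, of "{p}" "\<lambda>_. 1"]
  unfolding S_def
  by (simp add: scaleC_one)

lemma S_clinear: "clinear_op S"
  unfolding S_def by (rule partial_isometry_clinear[OF src_orthonormal tgt_orthonormal finite_I])

lemma S_scale: "S (c *\<^sub>C u) = c *\<^sub>C S u"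
  using S_clinear unfolding clinear_op_def by blast

lemma origin_in_I: "(0, 0) \<in> I"
  unfolding I_def using m_pos by auto

lemma x_eq_src: "x = complex_of_real (norm x) *\<^sub>C src (0, 0)"
  using x_eq unfolding src_def by simp

lemma S_x: "S x = complex_of_real (norm x) *\<^sub>C sE 0"
  by (subst x_eq_src) (simp add: S_scale S_src[OF origin_in_I] tgt_level_0)

lemma cinner_S_left: "cinner (S v) y = (\<Sum>p\<in>I. cinner v (src p) * cinner (tgt p) y)"
  unfolding S_def partial_isometry_def by (simp add: cinner.sum_left cinner_scaleC_left)

definition "R = {p \<in> I. regular p}"

lemma sum_I_split: "(\<Sum>p\<in>I. h p) = (\<Sum>i<m. h (0, i)) + h (2*N-1, 0) + (\<Sum>p\<in>R. h p)"
proof -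
  have Ieq: "I = ((\<lambda>i. (0, i)) ` {..<m}) \<union> ({(2*N-1, 0)} \<union> R)"
    unfolding R_def regular_def using corner_in_I by (auto simp: I_def)
  have fR: "finite R" unfolding R_def using finite_I by simp
  have d1: "((\<lambda>i. (0::nat, i)) ` {..<m}) \<inter> ({(2*N-1, 0)} \<union> R) = {}"
    unfolding R_def regular_def using N_ge_3 by auto
  have d2: "{(2*N-1, 0)} \<inter> R = {}" unfolding R_def regular_def by auto
  have "(\<Sum>p\<in>I. h p) = (\<Sum>p\<in>(\<lambda>i. (0, i)) ` {..<m}. h p) + (\<Sum>p\<in>{(2*N-1, 0)} \<union> R. h p)"
    unfolding Ieq by (rule sum.union_disjoint) (use fR d1 in auto)
  also have "(\<Sum>p\<in>(\<lambda>i. (0, i)) ` {..<m}. h p) = (\<Sum>i<m. h (0, i))"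
    by (rule sum.reindex_cong[where l="\<lambda>i. (0, i)"]) (auto simp: inj_on_def)
  also have "(\<Sum>p\<in>{(2*N-1, 0)} \<union> R. h p) = h (2*N-1, 0) + (\<Sum>p\<in>R. h p)"
    by (subst sum.union_disjoint) (use fR d2 in auto)
  finally show ?thesis by (simp add: add.assoc)
qed

lemma cinner_S_phi: assumes K': "N+2 \<le> k" "k \<le> 2*N-1"
  shows "cinner (S v) (\<phi> (k, 0)) = cinner v (\<phi> (k-1, 0))"
proof -
  have kK: "(k, 0) \<in> K" using K' w_pos N_ge_3 by (intro mem_K) auto
  have a: "cinner (tgt (0, i)) (\<phi> (k, 0)) = 0" if "i < m" for i
    using cinner_sE_phi[OF that kK] K' tgt_level_0 by simp
  have b: "cinner (tgt (2*N-1, 0)) (\<phi> (k, 0)) = 0"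
    using cinner_omega_phi[OF kK] K' tgt_corner by simp
  have rk: "regular (k-1, 0)" unfolding regular_def I_def using K' w_pos N_ge_3 by auto
  have c: "cinner (tgt p) (\<phi> (k, 0)) = (if p = (k-1, 0) then 1 else 0)" if "p \<in> R" for p
  proof -
    have rp: "regular p" using that unfolding R_def by simp
    have "\<sigma> p = (k, 0) \<longleftrightarrow> p = (k-1, 0)"
      using rp K' N_ge_3 unfolding regular_def I_def \<sigma>_def by (auto simp: prod_eq_iff)
    then show ?thesis using tgt_regular[OF rp] cinner_phi_phi[OF sigma_in_K[OF rp] kK] by auto
  qed
  have "cinner (S v) (\<phi> (k, 0)) = (\<Sum>p\<in>R. cinner v (src p) * (if p = (k-1, 0) then 1 else 0))"
    unfolding cinner_S_left sum_I_split using a b c by simp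
  also have "\<dots> = cinner v (src (k-1, 0))"
    using rk finite_I unfolding R_def by (simp add: if_distrib regular_def cong: if_cong)
  also have "src (k-1, 0) = \<phi> (k-1, 0)" unfolding src_def using K' by simp
  finally show ?thesis .
qed

text \<open>The coefficient of \<open>S\<^sup>l x\<close> along \<open>\<phi> (N + j, 0)\<close> in the second chain; it is \<open>c0\<close> exactly when
  \<open>l = j\<close>, so that \<open>\<phi> (2N-1, 0)\<close>, the preimage of \<open>\<omega>\<close>, is reached only at step \<open>N - 1\<close>.\<close>
definition "coord l j = cinner ((S ^^ l) x) (\<phi> (N+j, 0))"

lemma coord_0: "1 \<le> j \<Longrightarrow> j \<le> N-1 \<Longrightarrow> coord 0 j = 0"
  unfolding coord_def using cinner_E_phi[OF x_in_E] w_pos N_ge_3 by (simp add: mem_K)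

lemma coord_1_1: "coord 1 1 = complex_of_real c0"
proof -
  have Nk: "(N+1, 0) \<in> K" using N1_in_K m_pos by simp
  have "cinner (sE 0) (\<phi> (N+1, 0)) = complex_of_real (sqrt \<eta>)"
    unfolding cinner_sE_left
    using cinner_E_phi[OF B_in_E Nk] cinner_D_phi[OF m_pos Nk] cinner_phi_phi[OF Nk Nk] N_ge_3
    by simp
  then show ?thesis unfolding coord_def c0_def using S_x by (simp add: cinner_scaleC_left)
qed

lemma coord_rec: "\<forall>j. 1 \<le> j \<longrightarrow> j \<le> N-1 \<longrightarrow> coord l j = (if l < j then 0 else coord (l + 1 - j) 1)"
proof (induction l)
  case 0 then show ?case using coord_0 by simp
next
  case (Suc l)
  show ?case
  proof (intro allI impI)
    fix j assume j: "1 \<le> j" "j \<le> N-1"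
    show "coord (Suc l) j = (if Suc l < j then 0 else coord (Suc l + 1 - j) 1)"
    proof (cases "j = 1")
      case True then show ?thesis by simp
    next
      case False
      have "coord (Suc l) j = cinner (S ((S ^^ l) x)) (\<phi> (N+j, 0))" unfolding coord_def by simp
      also have "\<dots> = cinner ((S ^^ l) x) (\<phi> (N+j-1, 0))" using j False N_ge_3
        by (intro cinner_S_phi) auto
      also have "\<dots> = coord l (j-1)" unfolding coord_def using j False
        by (simp add: Nat.add_diff_assoc)
      also have "\<dots> = (if l < j - 1 then 0 else coord (l + 1 - (j-1)) 1)" using Suc.IH j False
        by simp
      finally show ?thesis using j False by (auto simp: Suc_diff_le)
    qed
  qed
qed

lemma coord_last: "coord l (N-1) = (if l = N-1 then complex_of_real c0 else 0)" if "l \<le> N-1"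
proof -
  have "coord l (N-1) = (if l < N-1 then 0 else coord (l + 1 - (N-1)) 1)" using coord_rec N_ge_3
    by simp
  then show ?thesis using that coord_1_1 by auto
qed

lemma PE_omega: "PE \<omega> = complex_of_real (1 / c0) *\<^sub>C d"
proof -
  have "cinner \<omega> (e k) = complex_of_real (1 / c0) * cinner d (e k)" if "k < m" for k
  proof -
    have "cinner \<omega>\<^sub>G (e k) = 0" unfolding \<omega>\<^sub>G_def using cinner_phi_e[OF N1_in_K that]
      by (simp add: cinner.sum_left cinner_scaleC_left)
    then show ?thesis unfolding \<omega>_def \<omega>\<^sub>E\<^sub>G_def using cinner_phi_e[OF twoN_in_K that]
      by (simp add: cinner_add_left cinner_scaleC_left)
  qed
  then have "PE \<omega> = (\<Sum>k<m. complex_of_real (1 / c0) *\<^sub>C (cinner d (e k) *\<^sub>C e k))"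
    unfolding PE_def by (intro sum.cong) (auto simp: scaleC_scaleC)
  also have "\<dots> = complex_of_real (1 / c0) *\<^sub>C d" by (subst d_expansion) (simp add: scaleC_sum_right)
  finally show ?thesis .
qed

lemma PE_S: "PE (S v) = complex_of_real \<rho> *\<^sub>C B (PE v) + cinner v (\<phi> (2*N-1, 0)) *\<^sub>C PE \<omega>"
proof -
  have inner: "cinner (S v) (e k) = complex_of_real \<rho> * cinner (B (PE v)) (e k)
      + cinner v (\<phi> (2*N-1, 0)) * cinner \<omega> (e k)" if k: "k < m" for k
  proof -
    have a: "cinner (tgt (0, i)) (e k) = complex_of_real \<rho> * cinner (B (e i)) (e k)" if "i < m" for i
      using tgt_level_0[of "(0, i)"] cinner_sE_left cinner_D_E[OF that e_in_E[OF k]] cinner_phi_E[OF e_in_E[OF k] N1_in_K[OF that]]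
      by simp
    have c: "cinner (tgt p) (e k) = 0" if "p \<in> R" for p
    proof -
      have rp: "regular p" using that unfolding R_def by simp
      show ?thesis using tgt_regular[OF rp] cinner_phi_e[OF sigma_in_K[OF rp] k] by simp
    qed
    have bsp: "src (2*N-1, 0) = \<phi> (2*N-1, 0)" unfolding src_def using N_ge_3 by simp
    have "cinner (S v) (e k) = (\<Sum>i<m. cinner v (e i) * (complex_of_real \<rho> * cinner (B (e i)) (e k)))
       + cinner v (\<phi> (2*N-1, 0)) * cinner \<omega> (e k)"
      unfolding cinner_S_left sum_I_split using a c tgt_corner bsp by (simp add: src_def)
    also have "(\<Sum>i<m. cinner v (e i) * (complex_of_real \<rho> * cinner (B (e i)) (e k)))
        = complex_of_real \<rho> * cinner (B (PE v)) (e k)"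
      unfolding PE_def B_sum B_scale
      by (simp add: cinner.sum_left cinner_scaleC_left sum_distrib_left algebra_simps)
    finally show ?thesis .
  qed
  have "PE (S v) = (\<Sum>k<m. (complex_of_real \<rho> * cinner (B (PE v)) (e k)) *\<^sub>C e k
      + (cinner v (\<phi> (2*N-1, 0)) * cinner \<omega> (e k)) *\<^sub>C e k)"
    unfolding PE_def[of "S v"] using inner by (intro sum.cong) (auto simp: scaleC_add_left)
  also have "\<dots> = complex_of_real \<rho> *\<^sub>C PE (B (PE v)) + cinner v (\<phi> (2*N-1, 0)) *\<^sub>C PE \<omega>"
    unfolding PE_def by (simp add: sum.distrib scaleC_sum_right scaleC_scaleC)
  also have "PE (B (PE v)) = B (PE v)" using B_in_E unfolding in_E_def by simp
  finally show ?thesis .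
qed

definition "Rpow l = ((\<lambda>u. complex_of_real \<rho> *\<^sub>C B u) ^^ l) x"

lemma PE_S_power: "l \<le> N-1 \<Longrightarrow> PE ((S ^^ l) x) = Rpow l"
proof (induction l)
  case 0 then show ?case using x_in_E unfolding in_E_def Rpow_def by simp
next
  case (Suc l)
  have "cinner ((S ^^ l) x) (\<phi> (2*N-1, 0)) = coord l (N-1)" unfolding coord_def using N_ge_3
    by (simp add: numeral_2_eq_2)
  also have "\<dots> = 0" using coord_last[of l] Suc.prems by simp
  finally have z: "cinner ((S ^^ l) x) (\<phi> (2*N-1, 0)) = 0" .
  show ?case using Suc z unfolding Rpow_def by (simp add: PE_S)
qed

lemma PE_S_power_N: "PE ((S ^^ N) x) = Rpow N + d"
proof -
  have N1: "N = Suc (N-1)" using N_ge_3 by simp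
  have "cinner ((S ^^ (N-1)) x) (\<phi> (2*N-1, 0)) = coord (N-1) (N-1)" unfolding coord_def using N_ge_3
    by (simp add: numeral_2_eq_2)
  also have "\<dots> = complex_of_real c0" using coord_last[of "N-1"] by simp
  finally have z: "cinner ((S ^^ (N-1)) x) (\<phi> (2*N-1, 0)) = complex_of_real c0" .
  have "PE ((S ^^ N) x) = PE (S ((S ^^ (N-1)) x))" by (subst N1) simp
  also have "\<dots> = complex_of_real \<rho> *\<^sub>C B (Rpow (N-1)) + d"
    unfolding PE_S PE_S_power[OF order_refl] z PE_omega using c0_pos
    by (simp add: scaleC_scaleC scaleC_one)
  also have "complex_of_real \<rho> *\<^sub>C B (Rpow (N-1)) = Rpow N"
    unfolding Rpow_def by (subst (2) N1) simp
  finally show ?thesis .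
qed

text \<open>\<open>S\<^sup>l x\<close> only involves basis vectors of level at most \<open>l\<close>, counted in both chains; for
  \<open>l < N\<close> these all lie in \<open>I\<close>, where \<open>S\<close> is isometric.\<close>
definition "level p = (if fst p \<le> N then fst p else fst p - N)"
definition "below l = {p \<in> I. level p \<le> l}"

lemma below_subset_I: "below l \<subseteq> I"
  unfolding below_def by auto

lemma finite_below: "finite (below l)"
  using finite_subset[OF below_subset_I finite_I] .

lemma scaleC_src_in_span: "p \<in> I \<Longrightarrow> level p \<le> l \<Longrightarrow> c *\<^sub>C src p \<in> family_span src (below l)"
  by (rule family_span_scaleC, rule family_span_base[OF finite_below]) (simp add: below_def)

lemma sE_in_span:
  assumes "i < m" "l + 1 \<le> N - 1"
  shows "sE i \<in> family_span src (below (l+1))"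
proof -
  have "B (e i) = (\<Sum>k<m. cinner (T (e i)) (e k) *\<^sub>C src (0, k))"
    unfolding B_eq src_def by simp
  also have "\<dots> \<in> family_span src (below (l+1))"
    by (rule family_span_sum, rule scaleC_src_in_span) (auto simp: I_def level_def)
  finally have B: "B (e i) \<in> family_span src (below (l+1))" .
  obtain c where "D i = (\<Sum>j<w. c j *\<^sub>C \<phi> (1, j))"
    using D_span[OF assms(1)] by blast
  also have "\<dots> = (\<Sum>j<w. c j *\<^sub>C src (1, j))"
    unfolding src_def by simp
  also have "\<dots> \<in> family_span src (below (l+1))"
    by (rule family_span_sum, rule scaleC_src_in_span) (use N_ge_3 in \<open>auto simp: I_def level_def\<close>)
  finally have D: "D i \<in> family_span src (below (l+1))" .
  have "complex_of_real (sqrt \<eta>) *\<^sub>C src (N+1, i) \<in> family_span src (below (l+1))"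
    by (rule scaleC_src_in_span) (use N_ge_3 assms m_le_w in \<open>auto simp: I_def level_def\<close>)
  then have P: "complex_of_real (sqrt \<eta>) *\<^sub>C \<phi> (N+1, i) \<in> family_span src (below (l+1))"
    unfolding src_def by simp
  show ?thesis
    unfolding sE_def by (intro family_span_add family_span_scaleC B D P)
qed

lemma tgt_in_span:
  assumes p: "p \<in> I" "level p \<le> l" and l: "l + 1 \<le> N - 1"
  shows "tgt p \<in> family_span src (below (l+1))"
proof (cases "fst p = 0")
  case True
  then show ?thesis
    using sE_in_span[OF I_level_0[OF p(1) True] l] tgt_level_0 by simp
next
  case False
  have "fst p \<noteq> 2*N-1"
  proof
    assume "fst p = 2*N-1"
    then have "level p = N - 1"
      unfolding level_def using N_ge_3 by auto
    then show False
      using p l by simp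
  qed
  then have "regular p" and \<sigma>: "\<sigma> p = (fst p + 1, snd p)"
    using p False unfolding regular_def \<sigma>_def by auto
  have "\<sigma> p \<in> below (l+1)"
    using p l False N_ge_3 unfolding \<sigma> below_def I_def level_def by auto
  moreover have "tgt p = src (\<sigma> p)"
    unfolding tgt_regular[OF \<open>regular p\<close>] src_def \<sigma> by simp
  ultimately show ?thesis
    using family_span_base[OF finite_below] by simp
qed

lemma S_power_x_in_span: "l \<le> N-1 \<Longrightarrow> (S ^^ l) x \<in> family_span src (below l)"
proof (induction l)
  case 0
  have "x \<in> family_span src (below 0)"
    by (subst x_eq_src, rule scaleC_src_in_span[OF origin_in_I]) (simp add: level_def)
  then show ?case by simp
next
  case (Suc l)
  then obtain c where c: "(S ^^ l) x = (\<Sum>p\<in>below l. c p *\<^sub>C src p)" unfolding family_span_def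
    by auto
  have "(S ^^ Suc l) x = (\<Sum>p\<in>below l. c p *\<^sub>C tgt p)"
    using partial_isometry_sum[OF src_orthonormal tgt_orthonormal finite_I below_subset_I] c
    unfolding S_def
    by simp
  also have "\<dots> \<in> family_span src (below (Suc l))"
  proof (rule family_span_sum, rule family_span_scaleC)
    fix p assume "p \<in> below l"
    then show "tgt p \<in> family_span src (below (Suc l))"
      using tgt_in_span[of p l] Suc.prems unfolding below_def
      by simp
  qed
  finally show ?case .
qed

lemma norm_S_power_x_Suc: "l < N \<Longrightarrow> norm ((S ^^ (l+1)) x) = norm ((S ^^ l) x)"
  using norm_partial_isometry_family_span[OF src_orthonormal tgt_orthonormal finite_I below_subset_I S_power_x_in_span[of l]]
  unfolding S_def
  by simp

lemma cinner_S_E: assumes u: "in_E u" and y: "in_E y"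
  shows "cinner (S u) y = complex_of_real \<rho> * cinner (T u) y"
proof -
  have a: "cinner (tgt (0, i)) y = complex_of_real \<rho> * cinner (B (e i)) y" if "i < m" for i
    using tgt_level_0[of "(0, i)"] cinner_sE_left cinner_D_E[OF that y] cinner_phi_E[OF y N1_in_K[OF that]]
    by simp
  have sp: "(2*N-1, 0) \<in> K" using corner_in_I I_in_K N_ge_3 by simp
  have b: "cinner u (src (2*N-1, 0)) = 0" unfolding src_def using N_ge_3 cinner_E_phi[OF u sp]
    by simp
  have c: "cinner u (src p) = 0" if "p \<in> R" for p
    using that cinner_E_phi[OF u I_in_K] unfolding R_def regular_def src_def by auto
  have "cinner (S u) y = (\<Sum>i<m. cinner u (e i) * (complex_of_real \<rho> * cinner (B (e i)) y))"
    unfolding cinner_S_left sum_I_split using a b c by (simp add: src_def)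
  also have "\<dots> = complex_of_real \<rho> * cinner (B (PE u)) y"
    unfolding PE_def B_sum B_scale
    by (simp add: cinner.sum_left cinner_scaleC_left sum_distrib_left algebra_simps)
  also have "B (PE u) = B u" using u unfolding in_E_def by simp
  also have "cinner (B u) y = cinner (T u) y" unfolding B_PE by (rule cinner_PE_left[OF y])
  finally show ?thesis .
qed

lemma rho_ge: "1 - \<eta> \<le> \<rho>"
proof -
  have "(1 - \<eta>)\<^sup>2 \<le> 1 - \<eta>"
    using eta_pos eta_le_half by (simp add: power2_eq_square mult_le_cancel_right1)
  then show ?thesis
    unfolding \<rho>_def using real_le_rsqrt by blast
qed

lemma cmod_cinner_S_minus_T_le:
  assumes "in_E u" "in_E y" "norm u \<le> 1" "norm y \<le> 1"
  shows "cmod (cinner (S u - T u) y) \<le> \<eta>"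
proof -
  have "cinner (S u - T u) y = complex_of_real (\<rho> - 1) * cinner (T u) y"
    using cinner_S_E[OF assms(1,2)] by (simp add: cinner.diff_left algebra_simps)
  moreover have "cmod (complex_of_real (\<rho> - 1)) = 1 - \<rho>"
    using rho_le by (simp only: norm_of_real)
  ultimately have "cmod (cinner (S u - T u) y) = (1 - \<rho>) * cmod (cinner (T u) y)"
    by (simp only: norm_mult)
  also have "\<dots> \<le> (1 - \<rho>) * (norm (T u) * norm y)"
    using rho_le by (intro mult_left_mono norm_cinner_le) simp
  also have "\<dots> \<le> (1 - \<rho>) * 1"
    using rho_le norm_T_le[of u] assms(3,4)
    by (intro mult_left_mono) (simp_all add: mult_le_one)
  finally show ?thesis
    using rho_ge by simp
qed

lemma cinner_S_power_N_x: "in_E y \<Longrightarrow> cinner ((S ^^ N) x) y = cinner (Rpow N + d) y"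
  using cinner_PE_left[of y "(S ^^ N) x"] by (simp add: PE_S_power_N)

end

lemma orthonormal_frame_through:
  fixes x :: "'a::complex_hilbert"
  assumes "x \<noteq> 0" "finite V"
  shows "\<exists>(e :: nat \<Rightarrow> 'a) m. 0 < m \<and> cinner.orthonormal e {..<m} \<and> x = complex_of_real (norm x) *\<^sub>C e 0 \<and>
    (\<forall>v\<in>V. (\<Sum>k<m. cinner v (e k) *\<^sub>C e k) = v)"
proof -
  define x0 where "x0 = complex_of_real (1 / norm x) *\<^sub>C x"
  have "norm x0 = 1"
    unfolding x0_def using assms by (simp add: norm_scaleC norm_divide)
  then have "cinner.orthonormal (\<lambda>_. x0) {..<1::nat}"
    unfolding cinner.orthonormal_def by (simp add: cinner_self_norm)
  moreover obtain vs where "set vs = V"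
    using finite_list[OF assms(2)] by blast
  ultimately obtain e :: "nat \<Rightarrow> 'a" and m where "1 \<le> m" "\<forall>i<1. e i = x0" "cinner.orthonormal e {..<m}"
    "\<forall>v\<in>V. (\<Sum>k<m. cinner v (e k) *\<^sub>C e k) = v"
    using orthonormal_frame_extension by blast
  moreover have "x = complex_of_real (norm x) *\<^sub>C x0"
    unfolding x0_def using assms by (simp add: scaleC_scaleC scaleC_one)
  ultimately show ?thesis
    by (intro exI[of _ e] exI[of _ m]) auto
qed

lemma hermitian_form_defect:
  assumes "clinear_op B" "\<And>u. norm (B u) \<le> norm u"
  shows "hermitian_form (\<lambda>u v. cinner u v - cinner (B u) (B v))"
proof
  fix u v y :: 'a and c
  show "cinner (u + v) y - cinner (B (u + v)) (B y) = cinner u y - cinner (B u) (B y) + (cinner v y - cinner (B v) (B y))"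
    using assms(1) unfolding clinear_op_def by (simp add: cinner_add_left)
  show "cinner (c *\<^sub>C u) y - cinner (B (c *\<^sub>C u)) (B y) = c * (cinner u y - cinner (B u) (B y))"
    using assms(1) unfolding clinear_op_def by (simp add: cinner_scaleC_left algebra_simps)
  show "cinner y u - cinner (B y) (B u) = cnj (cinner u y - cinner (B u) (B y))"
    by (metis cinner_commute complex_cnj_diff)
  have "(norm (B u))\<^sup>2 \<le> (norm u)\<^sup>2"
    using assms(2)[of u] by (simp add: power_mono)
  then show "0 \<le> Re (cinner u u - cinner (B u) (B u))"
    by (simp add: cinner_self_norm)
qed

lemma exists_defect_coefficients:
  fixes e :: "nat \<Rightarrow> 'a::complex_hilbert" and m :: nat
  assumes "clinear_op B" "\<And>u. norm (B u) \<le> norm u" "cinner.orthonormal e {..<m}"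
  shows "\<exists>(r::nat) c. \<forall>i<m. \<forall>k<m.
    (\<Sum>j<r. c i j * cnj (c k j)) = (if i = k then 1 else 0) - cinner (B (e i)) (B (e k))"
proof -
  interpret defect: hermitian_form "\<lambda>u v. cinner u v - cinner (B u) (B v)"
    by (rule hermitian_form_defect[OF assms(1,2)])
  obtain r :: nat and c where "\<forall>i<m. \<forall>k<m.
      cinner (e i) (e k) - cinner (B (e i)) (B (e k)) = (\<Sum>j<r. c i j * cnj (c k j))"
    using defect.gram_factorization[where v=e and m=m] by blast
  then show ?thesis
    using assms(3) unfolding cinner.orthonormal_def by (intro exI[of _ r] exI[of _ c]) auto
qed

lemma norm_funpow_scaled_contraction:
  fixes B :: "'a::complex_hilbert \<Rightarrow> 'a"
  assumes "\<And>u. norm (B u) \<le> norm u" "0 \<le> \<rho>"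
  shows "norm (((\<lambda>u. complex_of_real \<rho> *\<^sub>C B u) ^^ l) x) \<le> \<rho> ^ l * norm x"
proof (induction l)
  case (Suc l)
  have "norm (((\<lambda>u. complex_of_real \<rho> *\<^sub>C B u) ^^ Suc l) x)
      = \<rho> * norm (B (((\<lambda>u. complex_of_real \<rho> *\<^sub>C B u) ^^ l) x))"
    using assms(2) by (simp add: norm_scaleC)
  also have "\<dots> \<le> \<rho> * (\<rho> ^ l * norm x)"
    using assms Suc.IH by (intro mult_left_mono order.trans[OF assms(1)]) auto
  finally show ?case
    by simp
qed simp

lemma exists_defect_vectors:
  fixes e :: "nat \<Rightarrow> 'a::complex_hilbert" and B :: "'a \<Rightarrow> 'a" and N :: nat
  assumes "infinite_dimensional TYPE('a)" "clinear_op B" "\<And>u. norm (B u) \<le> norm u"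
    and e: "cinner.orthonormal e {..<m}"
  shows "\<exists>w (\<phi> :: nat \<times> nat \<Rightarrow> 'a) D. m \<le> w \<and> cinner.orthonormal \<phi> ({1..2*N+1} \<times> {..<w}) \<and>
    (\<forall>p\<in>{1..2*N+1} \<times> {..<w}. \<forall>i<m. cinner (e i) (\<phi> p) = 0) \<and>
    (\<forall>i<m. \<exists>c. D i = (\<Sum>j<w. c j *\<^sub>C \<phi> (1, j))) \<and>
    (\<forall>i<m. \<forall>k<m. cinner (D i) (D k) = (if i = k then 1 else 0) - cinner (B (e i)) (B (e k)))"
proof -
  obtain r :: nat and c where c: "\<forall>i<m. \<forall>k<m.
      (\<Sum>j<r. c i j * cnj (c k j)) = (if i = k then 1 else 0) - cinner (B (e i)) (B (e k))"
    using exists_defect_coefficients[OF assms(2,3) e] by blast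
  define w where "w = m + r"
    \<comment> \<open>room for the \<open>r\<close> defect coordinates and for the \<open>m\<close> images \<open>\<phi> (N+1, i)\<close>\<close>
  obtain \<phi> :: "nat \<times> nat \<Rightarrow> 'a" where \<phi>: "cinner.orthonormal \<phi> ({1..2*N+1} \<times> {..<w})"
    "\<forall>p\<in>{1..2*N+1} \<times> {..<w}. \<forall>a\<in>e ` {..<m}. cinner a (\<phi> p) = 0"
    using exists_orthonormal_orthogonal[OF assms(1), of "e ` {..<m}" "{1..2*N+1} \<times> {..<w}"] by auto
  define c' where "c' i j = (if j < r then c i j else 0)" for i j
  define D where "D i = (\<Sum>j<w. c' i j *\<^sub>C \<phi> (1, j))" for i
  have D_D: "cinner (D i) (D k) = (if i = k then 1 else 0) - cinner (B (e i)) (B (e k))"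
    if "i < m" "k < m" for i k
  proof -
    have "cinner.orthonormal (\<lambda>j. \<phi> (1, j)) {..<w}"
      using \<phi>(1) unfolding cinner.orthonormal_def by auto
    then have "cinner (D i) (D k) = (\<Sum>j<w. c' i j * cnj (c' k j))"
      unfolding D_def by (simp add: cinner_sum_sum_orthonormal)
    also have "\<dots> = (\<Sum>j<r. c i j * cnj (c k j))"
      unfolding c'_def w_def by (rule sum.mono_neutral_cong_right) auto
    finally show ?thesis
      using c that by simp
  qed
  show ?thesis
  proof (intro exI[of _ w] exI[of _ \<phi>] exI[of _ D] conjI)
    show "m \<le> w"
      unfolding w_def by simp
    show "\<forall>i<m. \<exists>c. D i = (\<Sum>j<w. c j *\<^sub>C \<phi> (1, j))"
      unfolding D_def by blast
  qed (use \<phi> D_D in auto)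
qed

lemma exists_correction:
  fixes e :: "nat \<Rightarrow> 'a::complex_hilbert" and B :: "'a \<Rightarrow> 'a" and N :: nat
  assumes e: "cinner.orthonormal e {..<m}"
    and B: "\<And>u. norm (B u) \<le> norm u" "\<And>u. (\<Sum>k<m. cinner (B u) (e k) *\<^sub>C e k) = B u"
    and eta: "0 < \<eta>" "\<eta> \<le> 1" and N: "0 < N" "sqrt (1 - \<eta>) ^ N \<le> \<eta> / 2" and x: "x \<noteq> 0"
  shows "\<exists>t d. 0 < t \<and> norm d \<le> \<eta> * norm x \<and> d = (\<Sum>k<m. cinner d (e k) *\<^sub>C e k) \<and>
    ((\<lambda>u. complex_of_real (sqrt (1 - \<eta>)) *\<^sub>C B u) ^^ N) x + d
      = complex_of_real t *\<^sub>C (\<Sum>k<m. cinner z (e k) *\<^sub>C e k)"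
proof -
  define \<theta> where "\<theta> = sqrt (1 - \<eta>)"
  define p where "p = (\<Sum>k<m. cinner z (e k) *\<^sub>C e k)"
  define RN where "RN = ((\<lambda>u. complex_of_real \<theta> *\<^sub>C B u) ^^ N) x"
  define t where "t = \<eta> * norm x / (2 * (norm p + 1))"
  have t: "0 < t" "t * norm p \<le> \<eta> * norm x / 2"
  proof -
    show "0 < t"
      unfolding t_def using eta x by (intro divide_pos_pos mult_pos_pos add_nonneg_pos) simp_all
    have "norm p / (norm p + 1) \<le> 1"
      using norm_ge_zero[of p] by (simp add: divide_le_eq_1_pos add_nonneg_pos)
    then have "\<eta> * norm x / 2 * (norm p / (norm p + 1)) \<le> \<eta> * norm x / 2"
      using eta by (intro mult_left_le) simp_all
    then show "t * norm p \<le> \<eta> * norm x / 2"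
      unfolding t_def by (simp add: field_simps)
  qed
  define d where "d = complex_of_real t *\<^sub>C p - RN"
  obtain M where M: "N = Suc M"
    using N(1) gr0_implies_Suc by blast
  have "d = (\<Sum>k<m. cinner d (e k) *\<^sub>C e k)"
  proof (rule orthonormal_expansion[OF e])
    from M have "RN = complex_of_real \<theta> *\<^sub>C (\<Sum>k<m. cinner (B (((\<lambda>u. complex_of_real \<theta> *\<^sub>C B u) ^^ M) x)) (e k) *\<^sub>C e k)"
      unfolding RN_def B(2) by simp
    then show "d = (\<Sum>k<m. (complex_of_real t * cinner z (e k) - complex_of_real \<theta> *
        cinner (B (((\<lambda>u. complex_of_real \<theta> *\<^sub>C B u) ^^ M) x)) (e k)) *\<^sub>C e k)"
      unfolding d_def p_def
      by (simp add: scaleC_diff_left sum_subtractf scaleC_sum_right scaleC_scaleC)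
  qed
  moreover have "norm d \<le> \<eta> * norm x"
  proof -
    have "norm RN \<le> \<theta> ^ N * norm x"
      unfolding RN_def using eta
      by (intro norm_funpow_scaled_contraction[OF B(1)]) (simp add: \<theta>_def)
    also have "\<dots> \<le> \<eta> / 2 * norm x"
      unfolding \<theta>_def by (rule mult_right_mono[OF N(2) norm_ge_zero])
    finally show ?thesis
      using norm_triangle_ineq4[of "complex_of_real t *\<^sub>C p" RN] t
      unfolding d_def by (simp add: norm_scaleC)
  qed
  moreover have "RN + d = complex_of_real t *\<^sub>C p"
    unfolding d_def by simp
  ultimately show ?thesis
    using t(1) unfolding RN_def \<theta>_def p_def by blast
qed

lemma finite_rank_approximation:
  fixes T :: "'a::complex_hilbert \<Rightarrow> 'a" and xs ys :: "nat \<Rightarrow> 'a"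
  assumes infdim: "infinite_dimensional TYPE('a)"
    and eta: "0 < \<eta>" "\<eta> \<le> 1/2" "\<eta> < \<epsilon>" and N: "3 \<le> N" "sqrt (1 - \<eta>) ^ N \<le> \<eta> / 2"
    and data: "(\<forall>j\<in>{1..n}. norm (xs j) = 1 \<and> norm (ys j) = 1) \<and> bounded_op T \<and> onorm T \<le> 1 \<and> x \<noteq> 0"
  shows "\<exists>S a. bounded_op S \<and> finite_rank S \<and> onorm S \<le> 1 \<and>
    (\<forall>j\<in>{1..n}. cmod (cinner (S (xs j) - T (xs j)) (ys j)) < \<epsilon> \<and>
      cinner (z - a *\<^sub>R (S ^^ N) x) (ys j) = 0) \<and>
    (\<forall>l<N. norm ((S ^^ (l + 1)) x) = norm ((S ^^ l) x))"
proof -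
  have unit: "\<forall>j\<in>{1..n}. norm (xs j) = 1 \<and> norm (ys j) = 1"
    and T: "bounded_op T" "onorm T \<le> 1" and x: "x \<noteq> 0"
    using data by auto
  have T_le: "norm (T u) \<le> norm u" for u
    by (rule norm_le_if_onorm_le_1[OF T])
  obtain e :: "nat \<Rightarrow> 'a" and m where e: "0 < m" "cinner.orthonormal e {..<m}"
    "x = complex_of_real (norm x) *\<^sub>C e 0"
    and frame: "\<forall>v\<in>xs ` {1..n} \<union> ys ` {1..n}. (\<Sum>k<m. cinner v (e k) *\<^sub>C e k) = v"
    using orthonormal_frame_through[OF x, of "xs ` {1..n} \<union> ys ` {1..n}"] by blast
  define B where "B u = (\<Sum>k<m. cinner (T u) (e k) *\<^sub>C e k)" for u
  have B_clinear: "clinear_op B"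
    using T(1) unfolding B_def bounded_op_def clinear_op_def
    by (simp add: cinner_add_left scaleC_add_left sum.distrib cinner_scaleC_left scaleC_sum_right
        scaleC_scaleC)
  have B_le: "norm (B u) \<le> norm u" for u
  proof -
    have "(norm (B u))\<^sup>2 \<le> (norm (T u))\<^sup>2"
      unfolding B_def norm_sum_orthonormal_sq[OF e(2) finite_lessThan]
      by (rule bessel_inequality[OF e(2)]) simp
    then show ?thesis
      using T_le[of u] by (simp add: power2_le_iff_abs_le)
  qed
  have B_expansion: "(\<Sum>k<m. cinner (B u) (e k) *\<^sub>C e k) = B u" for u
    using orthonormal_expansion[OF e(2), of "B u"] unfolding B_def by simp
  obtain w \<phi> D where \<phi>: "m \<le> w" "cinner.orthonormal \<phi> ({1..2*N+1} \<times> {..<w})"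
    "\<forall>p\<in>{1..2*N+1} \<times> {..<w}. \<forall>i<m. cinner (e i) (\<phi> p) = 0"
    and D: "\<forall>i<m. \<exists>c. D i = (\<Sum>j<w. c j *\<^sub>C \<phi> (1, j))"
    "\<forall>i<m. \<forall>k<m. cinner (D i) (D k) = (if i = k then 1 else 0) - cinner (B (e i)) (B (e k))"
    using exists_defect_vectors[OF infdim B_clinear B_le e(2), of N] by blast
  obtain t d where t: "0 < t" and d: "norm d \<le> \<eta> * norm x" "d = (\<Sum>k<m. cinner d (e k) *\<^sub>C e k)"
    and RN_d: "((\<lambda>u. complex_of_real (sqrt (1 - \<eta>)) *\<^sub>C B u) ^^ N) x + d
      = complex_of_real t *\<^sub>C (\<Sum>k<m. cinner z (e k) *\<^sub>C e k)"
    using exists_correction[OF e(2) B_le B_expansion, of \<eta> N x z] eta N x by auto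
  interpret shift_dilation T x e m \<phi> N w \<eta> D d B
    using T(1) T_le B_def e \<phi> D N(1) eta(1,2) d x
    by unfold_locales (auto simp: bounded_op_def fun_eq_iff)
  have in_E: "in_E (xs j)" "in_E (ys j)" if "j \<in> {1..n}" for j
    using frame that unfolding in_E_def PE_def by auto
  show ?thesis
  proof (intro exI[of _ S] exI[of _ "1 / t"] conjI ballI allI impI)
    fix j assume j: "j \<in> {1..n}"
    have "cmod (cinner (S (xs j) - T (xs j)) (ys j)) \<le> \<eta>"
      using cmod_cinner_S_minus_T_le[OF in_E[OF j]] unit j by simp
    then show "cmod (cinner (S (xs j) - T (xs j)) (ys j)) < \<epsilon>"
      using eta(3) by linarith
    have "cinner ((S ^^ N) x) (ys j) = complex_of_real t * cinner z (ys j)"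
      using cinner_S_power_N_x[OF in_E(2)[OF j]] cinner_PE_left[OF in_E(2)[OF j], of z] RN_d
      unfolding Rpow_def \<rho>_def PE_def by (simp add: cinner_scaleC_left)
    then show "cinner (z - (1 / t) *\<^sub>R (S ^^ N) x) (ys j) = 0"
      using t by (simp add: scaleR_scaleC cinner.diff_left cinner_scaleC_left)
  qed (use S_bounded S_finite_rank S_onorm norm_S_power_x_Suc in auto)
qed

lemma exists_power_le_half:
  assumes "0 < \<eta>" "\<eta> \<le> 1/2"
  shows "\<exists>N\<ge>3. sqrt (1 - \<eta>) ^ N \<le> \<eta> / 2"
proof -
  have "sqrt (1 - \<eta>) < 1"
    using assms by simp
  then obtain N0 where "sqrt (1 - \<eta>) ^ N0 < \<eta> / 2"
    using real_arch_pow_inv[of "\<eta> / 2" "sqrt (1 - \<eta>)"] assms by auto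
  moreover have "sqrt (1 - \<eta>) ^ max 3 N0 \<le> sqrt (1 - \<eta>) ^ N0"
    using assms \<open>sqrt (1 - \<eta>) < 1\<close> by (intro power_decreasing) auto
  ultimately show ?thesis
    by (intro exI[of _ "max 3 N0"]) auto
qed

theorem corollary9:
  assumes sep: "separable_space (euclidean :: 'a::complex_hilbert topology)"
    and infdim: "infinite_dimensional TYPE('a)"
  shows "\<forall>\<epsilon>>0. \<exists>N::nat. \<forall>(n::nat) (xs::nat \<Rightarrow> 'a) (ys::nat \<Rightarrow> 'a) (T::'a \<Rightarrow> 'a) (x::'a) (z::'a).
           (\<forall>j\<in>{1..n}. norm (xs j) = 1 \<and> norm (ys j) = 1) \<and>
           bounded_op T \<and> onorm T \<le> 1 \<and> x \<noteq> 0 \<longrightarrow>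
           (\<exists>(S::'a \<Rightarrow> 'a) (a::real).
              bounded_op S \<and> finite_rank S \<and> onorm S \<le> 1 \<and>
              (\<forall>j\<in>{1..n}. cmod (cinner (S (xs j) - T (xs j)) (ys j)) < \<epsilon> \<and>
                           cinner (z - a *\<^sub>R (S ^^ N) x) (ys j) = 0) \<and>
              (\<forall>l<N. norm ((S ^^ (l + 1)) x) = norm ((S ^^ l) x)))"
  apply (intro allI impI)
  subgoal premises \<epsilon> for \<epsilon>
  proof -
    define \<eta> where "\<eta> = min (\<epsilon> / 2) (1 / 2)"
    have \<eta>: "0 < \<eta>" "\<eta> \<le> 1/2" "\<eta> < \<epsilon>"
      unfolding \<eta>_def using \<epsilon> by auto
    obtain N where N: "3 \<le> N" "sqrt (1 - \<eta>) ^ N \<le> \<eta> / 2"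
      using exists_power_le_half[OF \<eta>(1,2)] by blast
    show ?thesis
      by (intro exI[of _ N] allI impI) (erule finite_rank_approximation[OF infdim \<eta> N])
  qed
  done

end
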